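(* Let $X$ be a non-singular $n$-dimensional tropical hypersurface of a non-singular tropical toric variety $Y$. Let $\sigma$ be a face of $X$ of dimension $q$ whose relative interior is contained in a stratum $Y_\rho$ of dimension $m$. Then the polynomial $$\chi_\sigma(\lambda):=\sum_{p=0}^n(-1)^p\operatorname{rank}\mathcal{F}^X_p(\sigma)\lambda^p$$ equals $$\chi_\sigma(\lambda)=(1-\lambda)^m-(1-\lambda)^q(-\lambda)^{m-q}.$$
   Context: A non-singular tropical toric variety $Y$ of dimension $n+1$ is the tropical toric variety associated to a simplicial unimodular rational polyhedral fan $\Sigma$ in $\mathbb{R}^{n+1}$; it is the disjoint union of strata $Y_\rho\cong\mathbb{R}^{n+1-\dim\rho}$, $\rho\in\Sigma$. For $\rho$ with primitive ray generators $r_1,\dots,r_s$, $T_{\mathbb Z}(Y_\rho)=\mathbb{Z}^{n+1}/\langle r_1,\dots,r_s\rangle$, with quotient maps $\pi_{\rho\eta}$ for $\rho\subset\eta$. For a rational polyhedron $\sigma$ with relative interior in $Y_\rho$, $T_{\mathbb Z}(\sigma)\subset T_{\mathbb Z}(Y_\rho)$ is its lattice of integer tangent vectors. A tropical hypersurface $X$ in $Y$ is the closure of a tropical hypersurface in $Y_0=\mathbb{R}^{n+1}$ defined by a tropical polynomial, with the polyhedral structure dual to the induced regular subdivision of its Newton polytope; $X$ is non-singular if each $X\cap Y_\rho$ is a tropical hypersurface in $Y_\rho$ dual to a primitive regular triangulation of its Newton polytope. For a face $\tau$ of $X$ with relative interior in $Y_\rho$, $\mathcal{F}^X_p(\tau)=\sum_\sigma\bigwedge^pT_{\mathbb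 Z}(\sigma)\subset\bigwedge^pT_{\mathbb Z}(Y_\rho)$, sum over faces $\sigma\supseteq\tau$ of $X$ with relative interior in $Y_\rho$ (a free $\mathbb Z$-module). *)

theory Defs
  imports "HOL-Analysis.Analysis"
begin

text \<open>Ambient space: Y_0 = R^(n+1) is modelled as real^'n with CARD('n) = n+1.
  Integer vectors model Z^(n+1).  A stratum Y_rho = R^(n+1)/span rho is modelled by
  subsets of real^'n that are saturated under span rho (preimages).\<close>

definition ivecs :: "(real^'n::finite) set" where
  "ivecs = {v. \<forall>i. v$i \<in> \<int>}"

definition int_span :: "(real^'n::finite) set \<Rightarrow> (real^'n) set" where
  "int_span B = {(\<Sum>b\<in>F. c b *\<^sub>R b) | F c. finite F \<and> F \<subseteq> B \<and> (\<forall>b\<in>F. c b \<in> \<int>)}"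

definition lattice_basis :: "(real^'n::finite) set \<Rightarrow> (real^'n) set \<Rightarrow> nat \<Rightarrow> bool" where
  "lattice_basis L B k \<longleftrightarrow> finite B \<and> card B = k \<and> B \<subseteq> L \<and> int_span B = L"

definition cone_of :: "(real^'n::finite) set \<Rightarrow> (real^'n) set" where
  "cone_of R = {(\<Sum>r\<in>R. t r *\<^sub>R r) | t. \<forall>r\<in>R. t r \<ge> 0}"

text \<open>Simplicial unimodular rational polyhedral fan; each cone is given by the set of
  its primitive ray generators.\<close>
definition smooth_fan :: "(real^'n::finite) set set \<Rightarrow> bool" where
  "smooth_fan Fan \<longleftrightarrow> finite Fan \<and> {} \<in> Fan
     \<and> (\<forall>\<rho>\<in>Fan. finite \<rho> \<and> (\<exists>B. lattice_basis ivecs B CARD('n) \<and> \<rho> \<subseteq> B))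
     \<and> (\<forall>\<rho>\<in>Fan. \<forall>\<rho>'. \<rho>' \<subseteq> \<rho> \<longrightarrow> \<rho>' \<in> Fan)
     \<and> (\<forall>\<rho>\<in>Fan. \<forall>\<eta>\<in>Fan. cone_of \<rho> \<inter> cone_of \<eta> = cone_of (\<rho> \<inter> \<eta>))"

text \<open>The character lattice of the stratum Y_rho: the dual of Z^(n+1)/<rho>.\<close>
definition Mlat :: "(real^'n::finite) set \<Rightarrow> (real^'n) set" where
  "Mlat \<rho> = {a \<in> ivecs. \<forall>r\<in>\<rho>. a \<bullet> r = 0}"

text \<open>A tropical polynomial on Y_rho: finite nonempty set of exponents A in Mlat rho,
  coefficients c; max convention.\<close>
definition trop_poly :: "(real^'n::finite) set \<Rightarrow> (real^'n) set \<Rightarrow> bool" where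
  "trop_poly \<rho> A \<longleftrightarrow> finite A \<and> A \<noteq> {} \<and> A \<subseteq> Mlat \<rho>"

definition tval :: "(real^'n::finite) set \<Rightarrow> (real^'n \<Rightarrow> real) \<Rightarrow> real^'n \<Rightarrow> real" where
  "tval A c x = Max ((\<lambda>a. c a + a \<bullet> x) ` A)"

definition targmax :: "(real^'n::finite) set \<Rightarrow> (real^'n \<Rightarrow> real) \<Rightarrow> real^'n \<Rightarrow> (real^'n) set" where
  "targmax A c x = {a\<in>A. c a + a \<bullet> x = tval A c x}"

definition tvar :: "(real^'n::finite) set \<Rightarrow> (real^'n \<Rightarrow> real) \<Rightarrow> (real^'n) set" where
  "tvar A c = {x. card (targmax A c x) \<ge> 2}"

text \<open>Faces of the tropical hypersurface: the closed cells dual to the cells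
  conv(S) (S a maximizing set, |S| \<ge> 2) of the induced regular subdivision.\<close>
definition tfaces :: "(real^'n::finite) set \<Rightarrow> (real^'n \<Rightarrow> real) \<Rightarrow> (real^'n) set set" where
  "tfaces A c = {{y. S \<subseteq> targmax A c y} | S. \<exists>x. targmax A c x = S \<and> card S \<ge> 2}"

text \<open>The induced regular subdivision is a primitive triangulation: every cell is a
  unimodular simplex with respect to the lattice Mlat rho.\<close>
definition prim_tri :: "(real^'n::finite) set \<Rightarrow> (real^'n) set \<Rightarrow> (real^'n \<Rightarrow> real) \<Rightarrow> bool" where
  "prim_tri \<rho> A c \<longleftrightarrow> (\<forall>x. \<exists>a0\<in>targmax A c x.
     card ((\<lambda>a. a - a0) ` (targmax A c x - {a0})) = card (targmax A c x) - 1 \<and>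
     (\<exists>B. lattice_basis (Mlat \<rho>) B (CARD('n) - card \<rho>) \<and>
          (\<lambda>a. a - a0) ` (targmax A c x - {a0}) \<subseteq> B))"

text \<open>Intersection with the stratum Y_rho of the closure in Y of a set X0 in Y_0
  (as a saturated subset of real^'n): a sequence x_k converges to [y] in Y_rho iff
  x_k = y_k + sum_r t_{k,r} r with y_k \<longrightarrow> y and all t_{k,r} \<longrightarrow> +\<infinity>.\<close>
definition clos_stratum :: "(real^'n::finite) set \<Rightarrow> (real^'n) set \<Rightarrow> (real^'n) set" where
  "clos_stratum \<rho> X0 = {y. \<exists>xs ys ts. (\<forall>k. xs k \<in> X0)
      \<and> (\<forall>k::nat. xs k = ys k + (\<Sum>r\<in>\<rho>. ts k r *\<^sub>R r))
      \<and> ys \<longlonglongrightarrow> y \<and> (\<forall>r\<in>\<rho>. filterlim (\<lambda>k. ts k r) at_top sequentially)}"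

text \<open>X (closure of X0 in Y) is non-singular: each X \<inter> Y_rho is a tropical hypersurface
  in Y_rho dual to a primitive regular triangulation.\<close>
definition nonsingular :: "(real^'n::finite) set set \<Rightarrow> (real^'n) set \<Rightarrow> bool" where
  "nonsingular Fan X0 \<longleftrightarrow> (\<forall>\<rho>\<in>Fan. \<exists>A c. trop_poly \<rho> A \<and> prim_tri \<rho> A c
       \<and> clos_stratum \<rho> X0 = tvar A c)"

text \<open>Real tangent space of a (saturated) polyhedron; contains span rho.\<close>
definition tspace :: "(real^'n::finite) set \<Rightarrow> (real^'n) set" where
  "tspace S = span {x - y | x y. x \<in> S \<and> y \<in> S}"

definition ldet :: "nat \<Rightarrow> (nat \<Rightarrow> nat \<Rightarrow> real) \<Rightarrow> real" where
  "ldet p M = (\<Sum>\<pi> | \<pi> permutes {..<p}. real_of_int (sign \<pi>) * (\<Prod>i<p. M i (\<pi> i)))"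

text \<open>v_0 \<and> ... \<and> v_(p-1) in \<And>^p T_Z(Y_rho), where T_Z(Y_rho) = Z^(n+1)/<rho>, represented
  faithfully (injective Z-linear embedding) by its pairing with p-tuples of elements of
  the dual lattice Mlat rho: (phi_1..phi_p) \<mapsto> det(phi_i(v_k)).\<close>
definition wedge :: "(real^'n::finite) set \<Rightarrow> nat \<Rightarrow> (nat \<Rightarrow> real^'n) \<Rightarrow> ((real^'n) list \<Rightarrow> real)" where
  "wedge \<rho> p vs = (\<lambda>phis. if length phis = p \<and> set phis \<subseteq> Mlat \<rho>
                       then ldet p (\<lambda>i k. (phis ! i) \<bullet> vs k) else 0)"

definition zspan :: "('a \<Rightarrow> real) set \<Rightarrow> ('a \<Rightarrow> real) set" where
  "zspan U = {(\<lambda>z. \<Sum>u\<in>F. c u * u z) | F c. finite F \<and> F \<subseteq> U \<and> (\<forall>u\<in>F. c u \<in> \<int>)}"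

definition zindep :: "('a \<Rightarrow> real) set \<Rightarrow> bool" where
  "zindep T \<longleftrightarrow> (\<forall>c. (\<forall>t\<in>T. c t \<in> \<int>) \<and> (\<forall>z. (\<Sum>t\<in>T. c t * t z) = 0) \<longrightarrow> (\<forall>t\<in>T. c t = 0))"

definition zrank :: "('a \<Rightarrow> real) set \<Rightarrow> nat" where
  "zrank S = Max {card T | T. finite T \<and> T \<subseteq> S \<and> zindep T}"

text \<open>F^X_p(sigma) for a face sigma with relative interior in Y_rho, where the faces of X
  with relative interior in Y_rho are those of the hypersurface X \<inter> Y_rho = tvar A c.\<close>
definition Fp :: "(real^'n::finite) set \<Rightarrow> (real^'n) set \<Rightarrow> (real^'n \<Rightarrow> real) \<Rightarrow> nat
                  \<Rightarrow> (real^'n) set \<Rightarrow> ((real^'n) list \<Rightarrow> real) set" where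
  "Fp \<rho> A c p \<sigma> = zspan {wedge \<rho> p vs | vs \<tau>. \<tau> \<in> tfaces A c \<and> \<sigma> \<subseteq> \<tau>
                             \<and> (\<forall>k<p. vs k \<in> ivecs \<inter> tspace \<tau>)}"

end

theory Submission
  imports Defs "Jordan_Normal_Form.Determinant"
begin

no_notation Matrix.scalar_prod (infix "\<bullet>" 70)

text \<open>
  Let x0 be a point in the relative interior of sigma. Its maximizing monomials form a primitive
  simplex with vertices a0 and a0 + b_i (i < k); complete the edges b_i to a basis b_0, ..., b_(m-1)
  of the character lattice of the stratum, m = n + 1 - card rho. The faces containing sigma are
  dual to the faces of this simplex, so the tangent space of each of them is orthogonal to some
  edge b_i or b_i - b_j (i, j < k), while the edge from a0 to a0 + b_i is dual to a face with
  tangent space the orthogonal complement of b_i. Evaluate p-vectors on the p-tuples of basis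
  vectors indexed by p-subsets J of {0, ..., m-1}: every wedge of tangent vectors of a face
  vanishes on the tuples with J containing {0, ..., k-1} and is determined by its values on the
  others, while for each of the others the wedge of the integer dual vectors u_j, j in J, lies in
  F_p(sigma); these wedges are independent. Hence rank F_p(sigma) = C(m, p) - C(m - k, p - k), and
  since the tangent space of sigma is cut out by b_0, ..., b_(k-1) we get q = m - k and the
  binomial theorem gives the polynomial.
\<close>

section \<open>Determinants of index functions\<close>

lemma ldet_eq_det: "ldet p M = Determinant.det (Matrix.mat p p (\<lambda>(i,j). M i j))"
  unfolding ldet_def Determinant.det_def by (auto simp: lessThan_atLeast0 intro!: sum.cong prod.cong)

lemma ldet_cong:
  assumes "\<And>i l. i < p \<Longrightarrow> l < p \<Longrightarrow> M i l = M' i l"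
  shows "ldet p M = ldet p M'"
  unfolding ldet_eq_det using assms by (intro arg_cong[where f = Determinant.det] eq_matI) auto

lemma ldet_zero_row:
  assumes "i < p" "\<And>l. l < p \<Longrightarrow> M i l = 0"
  shows "ldet p M = 0"
proof -
  have "ldet p M = ldet p (\<lambda>r l. if r = i then 0 else M r l)"
    using assms by (intro ldet_cong) auto
  also have "\<dots> = 0"
    unfolding ldet_def
    by (rule sum.neutral) (use assms in \<open>auto intro!: prod_zero bexI[of _ i]\<close>)
  finally show ?thesis .
qed

lemma ldet_identical_rows:
  assumes "i < p" "j < p" "i \<noteq> j" "\<And>l. l < p \<Longrightarrow> M i l = M j l"
  shows "ldet p M = 0"
  unfolding ldet_eq_det
  by (rule det_identical_rows[of _ p i j]) (use assms in \<open>auto intro!: eq_vecI\<close>)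

lemma ldet_permute_rows:
  assumes "\<pi> permutes {..<p}"
  shows "ldet p (\<lambda>i l. M (\<pi> i) l) = of_int (sign \<pi>) * ldet p M"
proof -
  have pm: "\<pi> permutes {0..<p}" using assms by (simp add: lessThan_atLeast0)
  have "Matrix.mat p p (\<lambda>(i,j). M (\<pi> i) j)
      = Matrix.mat p p (\<lambda>(i,j). Matrix.mat p p (\<lambda>(i,j). M i j) $$ (\<pi> i, j))"
    using permutes_in_image[OF pm] by (intro eq_matI) simp_all
  then show ?thesis unfolding ldet_eq_det
    using det_permute_rows[OF _ pm, of "Matrix.mat p p (\<lambda>(i,j). M i j)"] by simp
qed

lemma ldet_diag: "ldet p (\<lambda>i l. if i = l then d else 0) = d ^ p"
proof -
  have "Matrix.mat p p (\<lambda>(i,j). if i = j then d else 0) = d \<cdot>\<^sub>m 1\<^sub>m p"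
    by (rule eq_matI) simp_all
  then show ?thesis unfolding ldet_eq_det using det_smult[of d "1\<^sub>m p"] by simp
qed

lemma Ints_ldet:
  assumes "\<And>i l. i < p \<Longrightarrow> l < p \<Longrightarrow> M i l \<in> \<int>"
  shows "ldet p M \<in> \<int>"
  unfolding ldet_def
proof (intro Ints_sum Ints_mult Ints_prod)
  fix \<pi> i assume "\<pi> \<in> {\<pi>. \<pi> permutes {..<p}}" "i \<in> {..<p}"
  then show "M i (\<pi> i) \<in> \<int>" using assms permutes_in_image by fastforce
qed simp

lemma ldet_multilinear:
  assumes "finite J"
  shows "ldet p (\<lambda>i l. \<Sum>j\<in>J. \<alpha> i j * Q j l)
     = (\<Sum>f\<in>PiE {..<p} (\<lambda>_. J). (\<Prod>i<p. \<alpha> i (f i)) * ldet p (\<lambda>i l. Q (f i) l))"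
proof -
  have "ldet p (\<lambda>i l. \<Sum>j\<in>J. \<alpha> i j * Q j l)
     = (\<Sum>\<pi> | \<pi> permutes {..<p}. real_of_int (sign \<pi>) *
          (\<Sum>f\<in>PiE {..<p} (\<lambda>_. J). \<Prod>i<p. \<alpha> i (f i) * Q (f i) (\<pi> i)))"
    unfolding ldet_def by (rule sum.cong[OF refl]) (simp add: prod_sum_PiE assms)
  also have "\<dots> = (\<Sum>\<pi> | \<pi> permutes {..<p}. (\<Sum>f\<in>PiE {..<p} (\<lambda>_. J).
          (\<Prod>i<p. \<alpha> i (f i)) * (real_of_int (sign \<pi>) * (\<Prod>i<p. Q (f i) (\<pi> i)))))"
    by (rule sum.cong[OF refl], unfold sum_distrib_left, rule sum.cong[OF refl])
      (simp only: prod.distrib mult_ac)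
  also have "\<dots> = (\<Sum>f\<in>PiE {..<p} (\<lambda>_. J). (\<Sum>\<pi> | \<pi> permutes {..<p}.
          (\<Prod>i<p. \<alpha> i (f i)) * (real_of_int (sign \<pi>) * (\<Prod>i<p. Q (f i) (\<pi> i)))))"
    by (rule sum.swap)
  also have "\<dots> = (\<Sum>f\<in>PiE {..<p} (\<lambda>_. J). (\<Prod>i<p. \<alpha> i (f i)) * ldet p (\<lambda>i l. Q (f i) l))"
    unfolding ldet_def by (simp only: sum_distrib_left)
  finally show ?thesis .
qed


section \<open>Integer vectors and lattices\<close>

text \<open>One step of Gaussian elimination: a relation c among the vectors with coordinate z cleared by
  pivot t0 lifts to a relation among the original vectors.\<close>

lemma sum_elimination_eq:
  fixes v :: "'a \<Rightarrow> 'b \<Rightarrow> real"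
  assumes "finite T" "t0 \<in> T"
  shows "(\<Sum>t\<in>T. (if t = t0 then - (\<Sum>s\<in>T - {t0}. c s * v s z) else v t0 z * c t) * v t i)
       = (\<Sum>t\<in>T - {t0}. c t * (v t0 z * v t i - v t z * v t0 i))"
proof -
  let ?T' = "T - {t0}"
  have "(\<Sum>t\<in>T. (if t = t0 then - (\<Sum>s\<in>?T'. c s * v s z) else v t0 z * c t) * v t i)
      = - (\<Sum>s\<in>?T'. c s * v s z * v t0 i) + (\<Sum>t\<in>?T'. v t0 z * c t * v t i)"
    using assms by (simp add: sum.remove sum_distrib_right)
  then show ?thesis
    by (simp add: sum_subtractf right_diff_distrib sum_distrib_left mult_ac)
qed

lemma int_linear_dependence:
  fixes v :: "'a \<Rightarrow> 'b \<Rightarrow> real"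
  assumes "finite I" "finite T" "card I < card T" "\<forall>t\<in>T. \<forall>i\<in>I. v t i \<in> \<int>"
  shows "\<exists>c. (\<forall>t\<in>T. c t \<in> \<int>) \<and> (\<exists>t\<in>T. c t \<noteq> 0) \<and> (\<forall>i\<in>I. (\<Sum>t\<in>T. c t * v t i) = 0)"
  using assms
proof (induction I arbitrary: T v rule: finite_induct)
  case empty
  then have "T \<noteq> {}" by auto
  then show ?case by (intro exI[of _ "\<lambda>_. 1"]) auto
next
  case (insert z I)
  show ?case
  proof (cases "\<forall>t\<in>T. v t z = 0")
    case True
    have "card I < card T" "\<forall>t\<in>T. \<forall>i\<in>I. v t i \<in> \<int>" using insert by auto
    then obtain c where "(\<forall>t\<in>T. c t \<in> \<int>) \<and> (\<exists>t\<in>T. c t \<noteq> 0) \<and> (\<forall>i\<in>I. (\<Sum>t\<in>T. c t * v t i) = 0)"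
      using insert.IH[OF insert.prems(1)] by blast
    then show ?thesis using True by (intro exI[of _ c]) auto
  next
    case False
    then obtain t0 where t0: "t0 \<in> T" "v t0 z \<noteq> 0" by auto
    define v' where "v' t i = v t0 z * v t i - v t z * v t0 i" for t i
    have "finite (T - {t0})" "card I < card (T - {t0})" "\<forall>t\<in>T - {t0}. \<forall>i\<in>I. v' t i \<in> \<int>"
      using insert.prems t0 insert.hyps unfolding v'_def by auto
    from insert.IH[OF this] obtain c' where
      c': "\<forall>t\<in>T - {t0}. c' t \<in> \<int>" "\<exists>t\<in>T - {t0}. c' t \<noteq> 0"
        "\<forall>i\<in>I. (\<Sum>t\<in>T - {t0}. c' t * v' t i) = 0"
      by auto
    define c where "c t = (if t = t0 then - (\<Sum>s\<in>T - {t0}. c' s * v s z) else v t0 z * c' t)" for t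
    have key: "(\<Sum>t\<in>T. c t * v t i) = (\<Sum>t\<in>T - {t0}. c' t * v' t i)" for i
      unfolding c_def v'_def using sum_elimination_eq[OF insert.prems(1) t0(1)] .
    show ?thesis
    proof (intro exI[of _ c] conjI ballI)
      fix t assume "t \<in> T"
      then show "c t \<in> \<int>" using c'(1) insert.prems t0 unfolding c_def
        by (auto intro!: Ints_sum Ints_mult)
    next
      from c'(2) obtain t where "t \<in> T - {t0}" "c' t \<noteq> 0" by auto
      then show "\<exists>t\<in>T. c t \<noteq> 0" using t0 by (intro bexI[of _ t]) (auto simp: c_def)
    next
      fix i assume "i \<in> insert z I"
      then show "(\<Sum>t\<in>T. c t * v t i) = 0"
        using c'(3) unfolding key by (auto simp: v'_def)
    qed
  qed
qed

lemma zspan_base: "w \<in> U \<Longrightarrow> w \<in> zspan U"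
  unfolding zspan_def by (rule CollectI, rule exI[of _ "{w}"], rule exI[of _ "\<lambda>_. 1"]) auto

lemma zspan_Ints:
  assumes "\<And>w. w \<in> U \<Longrightarrow> w z \<in> \<int>" "t \<in> zspan U"
  shows "t z \<in> \<int>"
  using assms(2) unfolding zspan_def using assms(1) by (auto intro!: Ints_sum Ints_mult)

lemma inner_ivecs_Ints: "x \<in> ivecs \<Longrightarrow> y \<in> ivecs \<Longrightarrow> x \<bullet> y \<in> \<int>"
  unfolding ivecs_def inner_vec_def by (auto intro!: Ints_sum Ints_mult)

lemma sum_ivecs:
  "(\<And>l. l \<in> L \<Longrightarrow> c l \<in> \<int>) \<Longrightarrow> (\<And>l. l \<in> L \<Longrightarrow> v l \<in> ivecs) \<Longrightarrow> (\<Sum>l\<in>L. c l *\<^sub>R v l) \<in> ivecs"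
  unfolding ivecs_def by (auto simp: sum_component)

lemma Mlat_subset_ivecs: "Mlat \<rho> \<subseteq> ivecs"
  unfolding Mlat_def by auto

lemma Basis_subset_ivecs: "(Basis :: (real^'n::finite) set) \<subseteq> ivecs"
proof
  fix x :: "real^'n" assume "x \<in> Basis"
  then obtain i where "x = axis i 1" unfolding Basis_vec_def by auto
  then show "x \<in> ivecs" unfolding ivecs_def by (auto simp: axis_def)
qed

lemma int_span_subset_span: "int_span B \<subseteq> span B"
  unfolding int_span_def by (auto intro!: span_sum span_mul dest: span_base)

lemma in_span_image_sum:
  assumes "x \<in> span (f ` I)" "finite I" "inj_on f I"
  shows "\<exists>\<alpha>. x = (\<Sum>i\<in>I. \<alpha> i *\<^sub>R f i)"
proof -
  have "x \<in> range (\<lambda>\<beta>. \<Sum>v\<in>f ` I. \<beta> v *\<^sub>R v)"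
    using assms(1,2) span_finite[of "f ` I"] by simp
  then obtain \<beta> where "x = (\<Sum>v\<in>f ` I. \<beta> v *\<^sub>R v)" by blast
  also have "\<dots> = (\<Sum>i\<in>I. \<beta> (f i) *\<^sub>R f i)"
    using sum.reindex[OF assms(3)] by (simp add: comp_def)
  finally show ?thesis by (rule exI[of _ "\<lambda>i. \<beta> (f i)"])
qed

lemma independent_image_sum_eq_0:
  assumes "independent (f ` I)" "inj_on f I" "finite I" "(\<Sum>i\<in>I. c i *\<^sub>R f i) = 0" "j \<in> I"
  shows "c j = 0"
proof -
  define c' where "c' v = c (inv_into I f v)" for v
  have "(\<Sum>v\<in>f ` I. c' v *\<^sub>R v) = (\<Sum>i\<in>I. c' (f i) *\<^sub>R f i)"
    using sum.reindex[OF assms(2)] by (simp add: comp_def)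
  also have "\<dots> = (\<Sum>i\<in>I. c i *\<^sub>R f i)"
    using assms(2) by (intro sum.cong) (simp_all add: c'_def)
  finally have "c' (f j) = 0"
    using independentD[OF assms(1) finite_imageI[OF assms(3)] order_refl] assms(4,5) by simp
  then show ?thesis using assms(2,5) by (simp add: c'_def)
qed

lemma det_gram_nonzero:
  fixes bl :: "nat \<Rightarrow> real^'n::finite" and G :: "int mat"
  assumes ind: "independent (bl ` {..<m})" and inj: "inj_on bl {..<m}" and Gc: "G \<in> carrier_mat m m"
    and Gij: "\<And>i j. i < m \<Longrightarrow> j < m \<Longrightarrow> real_of_int (G $$ (i,j)) = bl i \<bullet> bl j"
  shows "Determinant.det G \<noteq> 0"
proof
  assume "Determinant.det G = 0"
  then obtain w where w: "w \<in> carrier_vec m" "w \<noteq> 0\<^sub>v m" "G *\<^sub>v w = 0\<^sub>v m"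
    using det_0_iff_vec_prod_zero[OF Gc] by auto
  define x where "x = (\<Sum>l<m. real_of_int (vec_index w l) *\<^sub>R bl l)"
  have Gw: "(\<Sum>l<m. real_of_int (vec_index w l) * (bl l \<bullet> bl i)) = 0" if "i < m" for i
  proof -
    have "vec_index (G *\<^sub>v w) i = 0" using w(3) that by simp
    then have "(\<Sum>l<m. G $$ (i,l) * vec_index w l) = 0"
      using that Gc w(1) by (simp add: scalar_prod_def lessThan_atLeast0)
    then have "(\<Sum>l<m. real_of_int (G $$ (i,l)) * real_of_int (vec_index w l)) = 0"
      by (metis (no_types, lifting) of_int_0 of_int_mult of_int_sum sum.cong)
    then show ?thesis
      using Gij that by (simp add: inner_commute mult.commute)
  qed
  have "x \<bullet> x = (\<Sum>i<m. real_of_int (vec_index w i) * (\<Sum>l<m. real_of_int (vec_index w l) * (bl l \<bullet> bl i)))"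
    unfolding x_def by (simp only: inner_sum_left inner_sum_right inner_scaleR_left inner_scaleR_right)
  also have "\<dots> = 0" using Gw by simp
  finally have "x = 0" by simp
  then have "\<forall>j<m. real_of_int (vec_index w j) = 0"
    using independent_image_sum_eq_0[OF ind inj finite_lessThan, of "\<lambda>l. real_of_int (vec_index w l)"]
    unfolding x_def by blast
  then have "w = 0\<^sub>v m" using w(1) by (intro eq_vecI) auto
  then show False using w(2) by simp
qed

text \<open>The u j are the combinations of the bl i with coefficients from the columns of the adjugate
  of the integral Gram matrix, and d is its determinant.\<close>

lemma exists_int_dual_vectors:
  fixes bl :: "nat \<Rightarrow> real^'n::finite"
  assumes iv: "\<And>i. i < m \<Longrightarrow> bl i \<in> ivecs"
    and ind: "independent (bl ` {..<m})" and inj: "inj_on bl {..<m}"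
  obtains u d where "d \<noteq> 0" "\<And>j. j < m \<Longrightarrow> u j \<in> ivecs"
    "\<And>i j. i < m \<Longrightarrow> j < m \<Longrightarrow> bl i \<bullet> u j = (if i = j then d else 0)"
proof -
  define G :: "int mat" where "G = Matrix.mat m m (\<lambda>(i,j). \<lfloor>bl i \<bullet> bl j\<rfloor>)"
  have Gc: "G \<in> carrier_mat m m" unfolding G_def by simp
  have Gij: "real_of_int (G $$ (i,j)) = bl i \<bullet> bl j" if "i < m" "j < m" for i j
    using that iv inner_ivecs_Ints[of "bl i" "bl j"] unfolding G_def by simp
  define Adj where "Adj = adj_mat G"
  have Ac: "Adj \<in> carrier_mat m m" and GA: "G * Adj = Determinant.det G \<cdot>\<^sub>m 1\<^sub>m m"
    using adj_mat[OF Gc] unfolding Adj_def by auto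
  define u where "u j = (\<Sum>l<m. real_of_int (Adj $$ (l,j)) *\<^sub>R bl l)" for j
  have "bl i \<bullet> u j = (if i = j then real_of_int (Determinant.det G) else 0)" if "i < m" "j < m" for i j
  proof -
    have "bl i \<bullet> u j = (\<Sum>l<m. real_of_int (G $$ (i,l)) * real_of_int (Adj $$ (l,j)))"
      unfolding u_def using Gij that by (auto simp: inner_sum_right intro!: sum.cong)
    also have "\<dots> = real_of_int ((G * Adj) $$ (i,j))"
      using that Gc Ac by (simp add: scalar_prod_def lessThan_atLeast0)
    finally show ?thesis unfolding GA using that Gc by simp
  qed
  moreover have "u j \<in> ivecs" if "j < m" for j
    unfolding u_def by (intro sum_ivecs) (auto intro: iv)
  moreover have "Determinant.det G \<noteq> 0" using det_gram_nonzero[OF ind inj Gc Gij] by blast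
  ultimately show ?thesis using that[of "real_of_int (Determinant.det G)" u] by auto
qed

lemma dual_vectors_independent:
  fixes w :: "nat \<Rightarrow> real^'n::finite"
  assumes "finite J" "d \<noteq> 0" "\<And>i j. i \<in> J \<Longrightarrow> j \<in> J \<Longrightarrow> v i \<bullet> w j = (if i = j then d else 0)"
  shows "inj_on w J" "independent (w ` J)"
proof -
  show inj: "inj_on w J"
  proof (rule inj_onI)
    fix i j assume ij: "i \<in> J" "j \<in> J" "w i = w j"
    then have "v i \<bullet> w j = d" using assms(3)[OF ij(1) ij(1)] by simp
    then show "i = j" using assms(2) assms(3)[OF ij(1,2)] by (auto split: if_splits)
  qed
  show "independent (w ` J)"
    unfolding independent_explicit
  proof (intro conjI allI impI ballI)
    show "finite (w ` J)" using assms(1) by simp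
  next
    fix c x assume c: "(\<Sum>x\<in>w ` J. c x *\<^sub>R x) = 0" and x: "x \<in> w ` J"
    then obtain i where i: "i \<in> J" "x = w i" by blast
    have "(\<Sum>j\<in>J. c (w j) *\<^sub>R w j) = 0" using c by (simp add: sum.reindex[OF inj])
    then have "v i \<bullet> (\<Sum>j\<in>J. c (w j) *\<^sub>R w j) = 0" by simp
    then have "(\<Sum>j\<in>J. c (w j) * (v i \<bullet> w j)) = 0" by (simp add: inner_sum_right)
    also have "(\<Sum>j\<in>J. c (w j) * (v i \<bullet> w j)) = (\<Sum>j\<in>J. if j = i then c (w i) * d else 0)"
      using assms(3)[OF i(1)] by (intro sum.cong refl) auto
    also have "\<dots> = c (w i) * d" using i(1) assms(1) by simp
    finally show "c x = 0" using assms(2) i(2) by simp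
  qed
qed

lemma obtain_enumeration_prefix:
  assumes "finite B" "E \<subseteq> B"
  obtains bl :: "nat \<Rightarrow> 'a" where "inj_on bl {..<card B}" "bl ` {..<card E} = E" "bl ` {..<card B} = B"
proof -
  obtain el where el: "set el = E" "distinct el"
    using finite_distinct_list[OF finite_subset[OF assms(2,1)]] by blast
  obtain rl where rl: "set rl = B - E" "distinct rl" using finite_distinct_list[of "B - E"] assms by blast
  let ?l = "el @ rl"
  have d: "distinct ?l" and s: "set ?l = B" using el rl assms by auto
  have len_el: "length el = card E" and len: "length ?l = card B"
    using el d s distinct_card by metis+
  have "bij_betw ((!) ?l) {..<card B} B" using d len s by (intro bij_betw_nth) auto
  moreover have "(!) ?l ` {..<card E} = (!) el ` {..<length el}"
    using len_el by (intro image_cong) (auto simp: nth_append)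
  moreover have "(!) el ` {..<length el} = E"
    using bij_betw_nth[OF el(2) refl] el(1) by (simp add: bij_betw_def)
  ultimately show ?thesis by (intro that[of "(!) ?l"]) (auto simp: bij_betw_def)
qed

lemma lattice_basis_ivecs_independent:
  fixes C :: "(real^'n::finite) set"
  assumes "lattice_basis ivecs C CARD('n)"
  shows "independent C"
proof -
  have C: "finite C" "card C = CARD('n)" "int_span C = ivecs"
    using assms unfolding lattice_basis_def by auto
  have "Basis \<subseteq> span C" using Basis_subset_ivecs int_span_subset_span C(3) by blast
  then have "span Basis \<subseteq> span C" by (rule span_minimal[OF _ subspace_span])
  then have "span C = UNIV" unfolding span_Basis by blast
  then show "independent C"
    by (intro card_le_dim_spanning[of C UNIV]) (use C in auto)
qed

text \<open>The integer vectors dual to the rays of a unimodular cone C, taken against the rays in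
  C - rho, lie in the character lattice of the stratum of rho.\<close>

lemma dim_Mlat_ge:
  fixes C \<rho> :: "(real^'n::finite) set"
  assumes C: "lattice_basis ivecs C CARD('n)" and \<rho>C: "\<rho> \<subseteq> C"
  shows "CARD('n) - card \<rho> \<le> dim (Mlat \<rho>)"
proof -
  have Cf: "finite C" "card C = CARD('n)" "C \<subseteq> ivecs" using C unfolding lattice_basis_def by auto
  define N where "N = CARD('n)"
  define r where "r = card \<rho>"
  obtain cl where cl: "inj_on cl {..<N}" "cl ` {..<r} = \<rho>" "cl ` {..<N} = C"
    using obtain_enumeration_prefix[OF Cf(1) \<rho>C] unfolding Cf(2) N_def r_def by blast
  have rN: "r \<le> N" using card_mono[OF Cf(1) \<rho>C] Cf(2) unfolding N_def r_def by simp
  have civ: "\<And>i. i < N \<Longrightarrow> cl i \<in> ivecs" using cl(3) Cf(3) by blast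
  have "independent (cl ` {..<N})" using lattice_basis_ivecs_independent[OF C] cl(3) by simp
  then obtain w d where w: "d \<noteq> 0" "\<And>j. j < N \<Longrightarrow> w j \<in> ivecs"
    "\<And>i j. i < N \<Longrightarrow> j < N \<Longrightarrow> cl i \<bullet> w j = (if i = j then d else 0)"
    using exists_int_dual_vectors[OF civ _ cl(1)] by metis
  have "w j \<in> Mlat \<rho>" if j: "j \<in> {r..<N}" for j
  proof -
    have "w j \<bullet> y = 0" if "y \<in> \<rho>" for y
    proof -
      obtain i where "i < r" "y = cl i" using cl(2) \<open>y \<in> \<rho>\<close> by blast
      then show ?thesis using w(3)[of i j] j rN by (simp add: inner_commute)
    qed
    then show ?thesis unfolding Mlat_def using w(2)[of j] j by simp
  qed
  then have "w ` {r..<N} \<subseteq> Mlat \<rho>" by blast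
  moreover have "\<And>i j. i \<in> {r..<N} \<Longrightarrow> j \<in> {r..<N} \<Longrightarrow> cl i \<bullet> w j = (if i = j then d else 0)"
    using w(3) by simp
  note indep = dual_vectors_independent[OF finite_atLeastLessThan w(1) this]
  ultimately have "card (w ` {r..<N}) \<le> dim (Mlat \<rho>)"
    by (intro independent_card_le_dim)
  moreover have "card (w ` {r..<N}) = N - r" using card_image[OF indep(1)] by simp
  ultimately show ?thesis unfolding N_def r_def by simp
qed

lemma lattice_basis_Mlat_independent:
  assumes "lattice_basis (Mlat \<rho>) B k" "k \<le> dim (Mlat \<rho>)"
  shows "independent B"
proof -
  have B: "finite B" "card B = k" "int_span B = Mlat \<rho>" using assms(1) unfolding lattice_basis_def by auto
  have "dim (Mlat \<rho>) \<le> dim (span B)" using int_span_subset_span B(3) by (metis dim_subset)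
  then show ?thesis
    using B assms(2) by (intro card_le_dim_spanning[OF span_superset order_refl]) auto
qed

lemma dim_orthogonal_independent:
  fixes bl :: "nat \<Rightarrow> real^'n::finite"
  assumes ind: "independent (bl ` {..<k})" and inj: "inj_on bl {..<k}"
  shows "dim {v. \<forall>i<k. bl i \<bullet> v = 0} = CARD('n) - k"
proof -
  let ?E = "bl ` {..<k}"
  have "{y \<in> UNIV. \<forall>x\<in>span ?E. real_inner_class.orthogonal x y} = {v. \<forall>i<k. bl i \<bullet> v = 0}"
  proof (intro equalityI subsetI)
    fix v assume "v \<in> {v. \<forall>i<k. bl i \<bullet> v = 0}"
    then have "?E \<subseteq> {x. x \<bullet> v = 0}" by auto
    then have "span ?E \<subseteq> {x. x \<bullet> v = 0}"
      by (rule span_minimal) (auto simp: subspace_def inner_add_left)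
    then show "v \<in> {y \<in> UNIV. \<forall>x\<in>span ?E. real_inner_class.orthogonal x y}" unfolding real_inner_class.orthogonal_def by auto
  qed (auto simp: real_inner_class.orthogonal_def intro: span_base)
  moreover have "dim (span ?E) = k"
    using dim_eq_card_independent[OF ind] card_image[OF inj] by (simp add: dim_span)
  moreover have "dim {y \<in> UNIV. \<forall>x\<in>span ?E. real_inner_class.orthogonal x y} + dim (span ?E) = dim (UNIV :: (real^'n) set)"
    by (rule dim_subspace_orthogonal_to_vectors) (auto simp: subspace_span)
  ultimately show ?thesis by simp
qed


section \<open>Enumerating finite sets of indices\<close>

lemma bij_betw_nth_sorted_list_of_set:
  "finite J \<Longrightarrow> bij_betw ((!) (sorted_list_of_set J)) {..<card J} J"
  by (intro bij_betw_nth) auto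

lemma nth_sorted_list_of_set_in:
  "finite J \<Longrightarrow> r < card J \<Longrightarrow> sorted_list_of_set J ! r \<in> J"
  using bij_betw_nth_sorted_list_of_set by (blast dest: bij_betwE)

lemma in_sorted_list_of_set_nth:
  "finite J \<Longrightarrow> x \<in> J \<Longrightarrow> \<exists>r<card J. sorted_list_of_set J ! r = x"
  using bij_betw_imp_surj_on[OF bij_betw_nth_sorted_list_of_set] by (metis imageE lessThan_iff)

lemma nth_sorted_list_of_set_eq_iff:
  "r < card J \<Longrightarrow> s < card J \<Longrightarrow> sorted_list_of_set J ! r = sorted_list_of_set J ! s \<longleftrightarrow> r = s"
  by (simp add: nth_eq_iff_index_eq)

text \<open>An injection f on {..<p} is the increasing enumeration of its image composed with a
  permutation; this is the permutation.\<close>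

definition sort_perm :: "nat \<Rightarrow> (nat \<Rightarrow> nat) \<Rightarrow> nat \<Rightarrow> nat" where
  "sort_perm p f = restrict_id (\<lambda>i. inv_into {..<p} ((!) (sorted_list_of_set (f ` {..<p}))) (f i)) {..<p}"

lemma sort_perm:
  assumes inj: "inj_on f {..<p}"
  shows "sort_perm p f permutes {..<p}"
    and "\<And>i. i < p \<Longrightarrow> sorted_list_of_set (f ` {..<p}) ! (sort_perm p f i) = f i"
proof -
  let ?g = "(!) (sorted_list_of_set (f ` {..<p}))"
  let ?h = "\<lambda>i. inv_into {..<p} ?g (f i)"
  have bij: "bij_betw ?g {..<p} (f ` {..<p})"
    using bij_betw_nth_sorted_list_of_set[of "f ` {..<p}"] card_image[OF inj] by simp
  have h: "?g (?h i) = f i" "?h i < p" if "i < p" for i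
  proof -
    have fi: "f i \<in> ?g ` {..<p}" using bij that by (simp add: bij_betw_def)
    show "?g (?h i) = f i" "?h i < p" using inv_into_into[OF fi] f_inv_into_f[OF fi] by auto
  qed
  then show "\<And>i. i < p \<Longrightarrow> ?g (sort_perm p f i) = f i" unfolding sort_perm_def restrict_id_def by simp
  have "inj_on ?h {..<p}"
    using inj h(1) by (intro inj_onI) (metis inj_onD lessThan_iff)
  moreover have "?h ` {..<p} = {..<p}"
    using h(2) by (intro endo_inj_surj[OF finite_lessThan _ calculation]) auto
  ultimately have "bij_betw ?h {..<p} {..<p}" unfolding bij_betw_def by blast
  then show "sort_perm p f permutes {..<p}" unfolding sort_perm_def by (rule permutes_restrict_id)
qed

definition subsets_missing :: "nat \<Rightarrow> nat \<Rightarrow> nat \<Rightarrow> nat set set" where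
  "subsets_missing m k p = {J. J \<subseteq> {..<m} \<and> card J = p \<and> \<not> {..<k} \<subseteq> J}"

lemma finite_subsets_missing: "finite (subsets_missing m k p)"
  by (rule finite_subset[of _ "Pow {..<m}"]) (auto simp: subsets_missing_def)

section \<open>The rank of the span of the face wedges\<close>

text \<open>In the application, bl 0, ..., bl (k - 1) are the edges at one vertex of the primitive simplex
  dual to sigma, completed to a basis of the character lattice, Faces are the faces containing
  sigma, and u is an integer dual basis.\<close>

locale dual_simplex_faces =
  fixes \<rho> :: "(real^'n::finite) set" and bl :: "nat \<Rightarrow> real^'n" and m k :: nat
    and Faces :: "(real^'n) set set" and u :: "nat \<Rightarrow> real^'n" and d :: real
  assumes bl_Mlat: "\<And>i. i < m \<Longrightarrow> bl i \<in> Mlat \<rho>"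
    and inj_bl: "inj_on bl {..<m}"
    and Mlat_span: "Mlat \<rho> \<subseteq> span (bl ` {..<m})"
    and k_le_m: "k \<le> m"
    and face_orthogonal_edge: "\<And>\<tau>. \<tau> \<in> Faces \<Longrightarrow> (\<exists>i<k. \<forall>v\<in>tspace \<tau>. bl i \<bullet> v = 0)
               \<or> (\<exists>i<k. \<exists>j<k. i \<noteq> j \<and> (\<forall>v\<in>tspace \<tau>. bl i \<bullet> v = bl j \<bullet> v))"
    and edge_face: "\<And>i. i < k \<Longrightarrow> \<exists>\<tau>\<in>Faces. \<forall>v. bl i \<bullet> v = 0 \<longrightarrow> v \<in> tspace \<tau>"
    and d_nonzero: "d \<noteq> 0" and dual_ivecs: "\<And>j. j < m \<Longrightarrow> u j \<in> ivecs"
    and dual: "\<And>i j. i < m \<Longrightarrow> j < m \<Longrightarrow> bl i \<bullet> u j = (if i = j then d else 0)"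
begin

abbreviation "sl J \<equiv> sorted_list_of_set J"

definition face_wedges :: "nat \<Rightarrow> ((real^'n) list \<Rightarrow> real) set" where
  "face_wedges p = {wedge \<rho> p vs | vs \<tau>. \<tau> \<in> Faces \<and> (\<forall>l<p. vs l \<in> ivecs \<inter> tspace \<tau>)}"

definition dual_tuple :: "nat set \<Rightarrow> (real^'n) list" where
  "dual_tuple J = map bl (sl J)"

definition minor :: "nat \<Rightarrow> (nat \<Rightarrow> real^'n) \<Rightarrow> nat set \<Rightarrow> real" where
  "minor p vs J = ldet p (\<lambda>i l. bl (sl J ! i) \<bullet> vs l)"

definition coord :: "(real^'n) list \<Rightarrow> nat \<Rightarrow> nat \<Rightarrow> real" where
  "coord phis i = (SOME \<alpha>. phis ! i = (\<Sum>j<m. \<alpha> j *\<^sub>R bl j))"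

definition injections_onto :: "nat \<Rightarrow> nat set \<Rightarrow> (nat \<Rightarrow> nat) set" where
  "injections_onto p J = {f \<in> PiE {..<p} (\<lambda>_. {..<m}). inj_on f {..<p} \<and> f ` {..<p} = J}"

definition expansion_coeff :: "nat \<Rightarrow> (real^'n) list \<Rightarrow> nat set \<Rightarrow> real" where
  "expansion_coeff p phis J = (if length phis = p \<and> set phis \<subseteq> Mlat \<rho> then
     (\<Sum>f\<in>injections_onto p J. (\<Prod>i<p. coord phis i (f i)) * of_int (sign (sort_perm p f))) else 0)"

definition dual_wedge :: "nat \<Rightarrow> nat set \<Rightarrow> ((real^'n) list \<Rightarrow> real)" where
  "dual_wedge p J = wedge \<rho> p (\<lambda>l. u (sl J ! l))"

lemma coord:
  assumes "i < length phis" "set phis \<subseteq> Mlat \<rho>"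
  shows "phis ! i = (\<Sum>j<m. coord phis i j *\<^sub>R bl j)"
proof -
  have "phis ! i \<in> span (bl ` {..<m})" using assms nth_mem Mlat_span by blast
  from in_span_image_sum[OF this finite_lessThan inj_bl] show ?thesis
    unfolding coord_def by (rule someI_ex)
qed

lemma wedge_dual_tuple:
  assumes "J \<subseteq> {..<m}" "card J = p"
  shows "wedge \<rho> p vs (dual_tuple J) = minor p vs J"
proof -
  have fJ: "finite J" using assms(1) finite_subset by blast
  have "length (dual_tuple J) = p" "set (dual_tuple J) \<subseteq> Mlat \<rho>"
    using assms fJ bl_Mlat unfolding dual_tuple_def by auto
  moreover have "ldet p (\<lambda>i l. dual_tuple J ! i \<bullet> vs l) = minor p vs J"
    unfolding minor_def dual_tuple_def by (rule ldet_cong) (use assms fJ in simp)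
  ultimately show ?thesis unfolding wedge_def by simp
qed

lemma minor_face_wedge_eq_0:
  assumes "\<tau> \<in> Faces" "\<And>l. l < p \<Longrightarrow> vs l \<in> tspace \<tau>"
    and J: "J \<subseteq> {..<m}" "card J = p" "{..<k} \<subseteq> J"
  shows "minor p vs J = 0"
proof -
  have fJ: "finite J" using J(1) finite_subset by blast
  have pos: "\<exists>r<p. sl J ! r = i" if "i < k" for i
    using in_sorted_list_of_set_nth[OF fJ] J that by auto
  from face_orthogonal_edge[OF assms(1)] show ?thesis
  proof
    assume "\<exists>i<k. \<forall>v\<in>tspace \<tau>. bl i \<bullet> v = 0"
    then obtain i where i: "i < k" "\<forall>v\<in>tspace \<tau>. bl i \<bullet> v = 0" by blast
    then obtain r where r: "r < p" "sl J ! r = i" using pos by blast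
    show ?thesis unfolding minor_def
      by (rule ldet_zero_row[OF r(1)]) (use r i assms(2) in auto)
  next
    assume "\<exists>i<k. \<exists>j<k. i \<noteq> j \<and> (\<forall>v\<in>tspace \<tau>. bl i \<bullet> v = bl j \<bullet> v)"
    then obtain i j where ij: "i < k" "j < k" "i \<noteq> j" "\<forall>v\<in>tspace \<tau>. bl i \<bullet> v = bl j \<bullet> v"
      by blast
    then obtain r r' where r: "r < p" "sl J ! r = i" "r' < p" "sl J ! r' = j" using pos by metis
    then have "r \<noteq> r'" using ij by auto
    then show ?thesis unfolding minor_def
      by (rule ldet_identical_rows[OF r(1) r(3)]) (use r ij assms(2) in auto)
  qed
qed

lemma face_wedges_Ints:
  assumes "w \<in> face_wedges p"
  shows "w z \<in> \<int>"
proof -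
  obtain vs \<tau> where w: "w = wedge \<rho> p vs" "\<forall>l<p. vs l \<in> ivecs \<inter> tspace \<tau>"
    using assms unfolding face_wedges_def by blast
  show ?thesis
  proof (cases "length z = p \<and> set z \<subseteq> Mlat \<rho>")
    case True
    then have "\<And>i. i < p \<Longrightarrow> z ! i \<in> ivecs" using Mlat_subset_ivecs nth_mem by blast
    then have "ldet p (\<lambda>i l. (z ! i) \<bullet> vs l) \<in> \<int>"
      using w(2) by (intro Ints_ldet inner_ivecs_Ints) auto
    then show ?thesis using True w(1) unfolding wedge_def by simp
  qed (use w(1) in \<open>auto simp: wedge_def\<close>)
qed

lemma wedge_coord_expansion:
  assumes "length phis = p" "set phis \<subseteq> Mlat \<rho>"
  shows "wedge \<rho> p vs phis
    = (\<Sum>f\<in>PiE {..<p} (\<lambda>_. {..<m}). (\<Prod>i<p. coord phis i (f i)) * ldet p (\<lambda>i l. bl (f i) \<bullet> vs l))"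
proof -
  have "wedge \<rho> p vs phis = ldet p (\<lambda>i l. phis ! i \<bullet> vs l)" using assms by (simp add: wedge_def)
  also have "\<dots> = ldet p (\<lambda>i l. \<Sum>j<m. coord phis i j * (bl j \<bullet> vs l))"
    using assms coord by (intro ldet_cong) (simp add: inner_sum_left)
  also have "\<dots> = (\<Sum>f\<in>PiE {..<p} (\<lambda>_. {..<m}). (\<Prod>i<p. coord phis i (f i)) * ldet p (\<lambda>i l. bl (f i) \<bullet> vs l))"
    by (rule ldet_multilinear) simp
  finally show ?thesis .
qed

lemma ldet_injection_rows:
  assumes "inj_on f {..<p}"
  shows "ldet p (\<lambda>i l. bl (f i) \<bullet> vs l) = of_int (sign (sort_perm p f)) * minor p vs (f ` {..<p})"
proof -
  have "ldet p (\<lambda>i l. bl (f i) \<bullet> vs l) = ldet p (\<lambda>i l. bl (sl (f ` {..<p}) ! sort_perm p f i) \<bullet> vs l)"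
    using sort_perm(2)[OF assms] by (intro ldet_cong) simp
  also have "\<dots> = of_int (sign (sort_perm p f)) * minor p vs (f ` {..<p})"
    unfolding minor_def by (rule ldet_permute_rows[OF sort_perm(1)[OF assms]])
  finally show ?thesis .
qed

text \<open>A wedge whose minors vanish on the p-sets containing all the edge indices is determined by
  its values on the dual tuples of the remaining p-sets: expand each argument in the basis bl by
  multilinearity, drop the non-injective terms and sort the injective ones.\<close>

lemma wedge_expansion:
  assumes vanish: "\<And>J. J \<subseteq> {..<m} \<Longrightarrow> card J = p \<Longrightarrow> {..<k} \<subseteq> J \<Longrightarrow> minor p vs J = 0"
  shows "wedge \<rho> p vs phis
    = (\<Sum>J\<in>subsets_missing m k p. expansion_coeff p phis J * wedge \<rho> p vs (dual_tuple J))"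
proof (cases "length phis = p \<and> set phis \<subseteq> Mlat \<rho>")
  case False
  then have "wedge \<rho> p vs phis = 0" "\<And>J. expansion_coeff p phis J = 0"
    unfolding wedge_def expansion_coeff_def by auto
  then show ?thesis by simp
next
  case True
  let ?G = "subsets_missing m k p"
  let ?P = "PiE {..<p} (\<lambda>_. {..<m})"
  let ?a = "\<lambda>f. \<Prod>i<p. coord phis i (f i)"
  let ?T = "\<lambda>f. ?a f * of_int (sign (sort_perm p f)) * minor p vs (f ` {..<p})"
  let ?Q = "\<lambda>f. inj_on f {..<p} \<and> f ` {..<p} \<in> ?G"
  have "wedge \<rho> p vs phis = (\<Sum>f\<in>?P. ?a f * ldet p (\<lambda>i l. bl (f i) \<bullet> vs l))"
    using True by (intro wedge_coord_expansion) auto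
  also have "\<dots> = (\<Sum>f\<in>?P. if ?Q f then ?T f else 0)"
  proof (rule sum.cong[OF refl])
    fix f assume f: "f \<in> ?P"
    show "?a f * ldet p (\<lambda>i l. bl (f i) \<bullet> vs l) = (if ?Q f then ?T f else 0)"
    proof (cases "inj_on f {..<p}")
      case False
      then obtain i j where ij: "i < p" "j < p" "i \<noteq> j" "f i = f j" unfolding inj_on_def by auto
      then show ?thesis using False by (simp add: ldet_identical_rows[OF ij(1-3)])
    next
      case inj: True
      have J: "f ` {..<p} \<subseteq> {..<m}" "card (f ` {..<p}) = p" using f card_image[OF inj] by auto
      then show ?thesis
        using inj vanish[OF J] ldet_injection_rows[OF inj] by (auto simp: subsets_missing_def)
    qed
  qed
  also have "\<dots> = (\<Sum>f\<in>{f\<in>?P. ?Q f}. ?T f)"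
    by (rule sum.inter_filter[symmetric]) (simp add: finite_PiE)
  also have "\<dots> = (\<Sum>J\<in>?G. \<Sum>f\<in>{f\<in>{f\<in>?P. ?Q f}. f ` {..<p} = J}. ?T f)"
    by (rule sum.group[symmetric]) (auto simp: finite_subsets_missing finite_PiE)
  also have "\<dots> = (\<Sum>J\<in>?G. expansion_coeff p phis J * wedge \<rho> p vs (dual_tuple J))"
  proof (rule sum.cong[OF refl])
    fix J assume J: "J \<in> ?G"
    then have "{f\<in>{f\<in>?P. ?Q f}. f ` {..<p} = J} = injections_onto p J"
      unfolding injections_onto_def by auto
    moreover have "(\<Sum>f\<in>injections_onto p J. ?T f)
        = (\<Sum>f\<in>injections_onto p J. ?a f * of_int (sign (sort_perm p f))) * minor p vs J"
      unfolding sum_distrib_right by (rule sum.cong[OF refl]) (simp add: injections_onto_def)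
    ultimately show "(\<Sum>f\<in>{f\<in>{f\<in>?P. ?Q f}. f ` {..<p} = J}. ?T f)
        = expansion_coeff p phis J * wedge \<rho> p vs (dual_tuple J)"
      using True J wedge_dual_tuple unfolding expansion_coeff_def subsets_missing_def by simp
  qed
  finally show ?thesis .
qed

lemma zspan_face_wedges_expansion:
  assumes "t \<in> zspan (face_wedges p)"
  shows "t z = (\<Sum>J\<in>subsets_missing m k p. expansion_coeff p z J * t (dual_tuple J))"
proof -
  have face_wedge: "w z = (\<Sum>J\<in>subsets_missing m k p. expansion_coeff p z J * w (dual_tuple J))"
    if w: "w \<in> face_wedges p" for w
  proof -
    obtain vs \<tau> where "w = wedge \<rho> p vs" "\<tau> \<in> Faces" "\<forall>l<p. vs l \<in> tspace \<tau>"
      using w unfolding face_wedges_def by blast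
    then show ?thesis using wedge_expansion minor_face_wedge_eq_0 by blast
  qed
  obtain F c where t: "t = (\<lambda>z. \<Sum>w\<in>F. c w * w z)" "F \<subseteq> face_wedges p"
    using assms unfolding zspan_def by blast
  have "t z = (\<Sum>w\<in>F. c w * (\<Sum>J\<in>subsets_missing m k p. expansion_coeff p z J * w (dual_tuple J)))"
    unfolding t(1) using t(2) face_wedge by (intro sum.cong) auto
  then show ?thesis
    unfolding t(1) by (simp add: sum_distrib_left mult_ac sum.swap[of _ F])
qed

lemma card_zindep_le:
  assumes "finite T" "T \<subseteq> zspan (face_wedges p)" "zindep T"
  shows "card T \<le> card (subsets_missing m k p)"
proof (rule ccontr)
  let ?G = "subsets_missing m k p"
  assume "\<not> card T \<le> card ?G"
  moreover have "\<forall>t\<in>T. \<forall>J\<in>?G. t (dual_tuple J) \<in> \<int>"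
    using assms(2) face_wedges_Ints by (blast intro: zspan_Ints)
  ultimately obtain c where c: "\<forall>t\<in>T. c t \<in> \<int>" "\<exists>t\<in>T. c t \<noteq> 0"
      "\<forall>J\<in>?G. (\<Sum>t\<in>T. c t * t (dual_tuple J)) = 0"
    using int_linear_dependence[OF finite_subsets_missing[of m k p] assms(1), where v = "\<lambda>t J. t (dual_tuple J)"]
    by auto
  have "(\<Sum>t\<in>T. c t * t z) = 0" for z
  proof -
    have "(\<Sum>t\<in>T. c t * t z)
        = (\<Sum>t\<in>T. c t * (\<Sum>J\<in>?G. expansion_coeff p z J * t (dual_tuple J)))"
      using assms(2) zspan_face_wedges_expansion by (intro sum.cong) auto
    also have "\<dots> = (\<Sum>J\<in>?G. expansion_coeff p z J * (\<Sum>t\<in>T. c t * t (dual_tuple J)))"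
      by (simp add: sum_distrib_left mult_ac sum.swap[of _ T])
    finally show ?thesis using c(3) by simp
  qed
  then show False using assms(3) c(1,2) unfolding zindep_def by blast
qed

lemma dual_wedge_dual_tuple:
  assumes J: "J \<in> subsets_missing m k p" and J': "J' \<in> subsets_missing m k p"
  shows "dual_wedge p J (dual_tuple J') = (if J = J' then d ^ p else 0)"
proof -
  have Jm: "J \<subseteq> {..<m}" "card J = p" and J'm: "J' \<subseteq> {..<m}" "card J' = p"
    using J J' unfolding subsets_missing_def by auto
  have fJ: "finite J" and fJ': "finite J'" using Jm J'm finite_subset by auto
  have "dual_wedge p J (dual_tuple J') = ldet p (\<lambda>r l. if sl J' ! r = sl J ! l then d else 0)"
    unfolding dual_wedge_def wedge_dual_tuple[OF J'm] minor_def
  proof (rule ldet_cong)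
    fix r l assume "r < p" "l < p"
    then have "sl J' ! r < m" "sl J ! l < m"
      using nth_sorted_list_of_set_in[OF fJ, of l] nth_sorted_list_of_set_in[OF fJ', of r] Jm J'm by auto
    then show "bl (sl J' ! r) \<bullet> u (sl J ! l) = (if sl J' ! r = sl J ! l then d else 0)"
      using dual by simp
  qed
  also have "\<dots> = (if J = J' then d ^ p else 0)"
  proof (cases "J = J'")
    case True
    then show ?thesis
      using nth_sorted_list_of_set_eq_iff[of _ J] Jm(2) ldet_diag
      by (simp add: ldet_cong[of p _ "\<lambda>r l. if r = l then d else 0"])
  next
    case False
    then obtain r where r: "r < p" "sl J' ! r \<notin> J"
      using in_sorted_list_of_set_nth[OF fJ'] J'm(2) card_subset_eq[OF fJ] Jm(2) by (metis subsetI)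
    then have "ldet p (\<lambda>r l. if sl J' ! r = sl J ! l then d else 0) = 0"
      using nth_sorted_list_of_set_in[OF fJ] Jm(2) by (intro ldet_zero_row[OF r(1)]) auto
    then show ?thesis using False by simp
  qed
  finally show ?thesis .
qed

lemma dual_wedge_in_face_wedges:
  assumes J: "J \<in> subsets_missing m k p"
  shows "dual_wedge p J \<in> face_wedges p"
proof -
  have Jm: "J \<subseteq> {..<m}" "card J = p" "\<not> {..<k} \<subseteq> J" using J unfolding subsets_missing_def by auto
  have fJ: "finite J" using Jm finite_subset by auto
  obtain i where i: "i < k" "i \<notin> J" using Jm(3) by auto
  obtain \<tau> where \<tau>: "\<tau> \<in> Faces" "\<forall>v. bl i \<bullet> v = 0 \<longrightarrow> v \<in> tspace \<tau>" using edge_face[OF i(1)] by blast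
  have "u (sl J ! l) \<in> ivecs \<inter> tspace \<tau>" if "l < p" for l
  proof -
    have "sl J ! l \<in> J" using nth_sorted_list_of_set_in[OF fJ] Jm(2) that by simp
    then have "i \<noteq> sl J ! l" "sl J ! l < m" using i Jm(1) by auto
    then have "bl i \<bullet> u (sl J ! l) = 0" using dual[of i "sl J ! l"] i k_le_m by simp
    then show ?thesis using dual_ivecs \<open>sl J ! l < m\<close> \<tau>(2) by auto
  qed
  then show ?thesis unfolding face_wedges_def dual_wedge_def using \<tau>(1) by blast
qed

lemma inj_on_dual_wedge: "inj_on (dual_wedge p) (subsets_missing m k p)"
  using dual_wedge_dual_tuple d_nonzero by (intro inj_onI) (metis power_not_zero)

lemma zindep_dual_wedges: "zindep (dual_wedge p ` subsets_missing m k p)"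
  unfolding zindep_def
proof (intro allI impI ballI)
  let ?G = "subsets_missing m k p"
  fix c t assume c: "(\<forall>t\<in>dual_wedge p ` ?G. c t \<in> \<int>) \<and> (\<forall>z. (\<Sum>t\<in>dual_wedge p ` ?G. c t * t z) = 0)"
    and "t \<in> dual_wedge p ` ?G"
  then obtain J0 where J0: "J0 \<in> ?G" "t = dual_wedge p J0" by blast
  have "0 = (\<Sum>t\<in>dual_wedge p ` ?G. c t * t (dual_tuple J0))" using c by simp
  also have "\<dots> = (\<Sum>J\<in>?G. c (dual_wedge p J) * dual_wedge p J (dual_tuple J0))"
    by (rule sum.reindex_cong[OF inj_on_dual_wedge refl]) simp
  also have "\<dots> = (\<Sum>J\<in>?G. if J = J0 then c (dual_wedge p J0) * d ^ p else 0)"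
    by (rule sum.cong[OF refl]) (simp add: dual_wedge_dual_tuple J0(1))
  also have "\<dots> = c (dual_wedge p J0) * d ^ p" using J0(1) finite_subsets_missing by simp
  finally show "c t = 0" using d_nonzero J0(2) by simp
qed

theorem zrank_zspan_face_wedges: "zrank (zspan (face_wedges p)) = card (subsets_missing m k p)"
  unfolding zrank_def
proof (rule Max_eqI)
  let ?S = "{card T |T. finite T \<and> T \<subseteq> zspan (face_wedges p) \<and> zindep T}"
  have "?S \<subseteq> {..card (subsets_missing m k p)}" using card_zindep_le by auto
  then show "finite ?S" by (rule finite_subset) simp
  show "y \<le> card (subsets_missing m k p)" if "y \<in> ?S" for y
    using that card_zindep_le by auto
  have "card (dual_wedge p ` subsets_missing m k p) = card (subsets_missing m k p)"
    using inj_on_dual_wedge by (rule card_image)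
  moreover have "dual_wedge p ` subsets_missing m k p \<subseteq> zspan (face_wedges p)"
    using dual_wedge_in_face_wedges zspan_base by blast
  ultimately show "card (subsets_missing m k p) \<in> ?S"
    using zindep_dual_wedges finite_subsets_missing by (intro CollectI exI[of _ "dual_wedge p ` subsets_missing m k p"]) simp
qed

end


section \<open>Faces of a tropical hypersurface and their tangent spaces\<close>

lemma targmax_iff:
  assumes "finite A" "A \<noteq> {}"
  shows "a \<in> targmax A c x \<longleftrightarrow> a \<in> A \<and> (\<forall>b\<in>A. c b + b \<bullet> x \<le> c a + a \<bullet> x)"
proof -
  let ?V = "(\<lambda>a. c a + a \<bullet> x) ` A"
  have fin: "finite ?V" "?V \<noteq> {}" using assms by auto
  have ge: "\<And>b. b \<in> A \<Longrightarrow> c b + b \<bullet> x \<le> tval A c x"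
    unfolding tval_def using fin by (intro Max_ge) auto
  have "tval A c x \<in> ?V" unfolding tval_def using fin by (rule Max_in)
  then obtain b0 where b0: "b0 \<in> A" "tval A c x = c b0 + b0 \<bullet> x" by auto
  show ?thesis
  proof
    assume "a \<in> targmax A c x"
    then show "a \<in> A \<and> (\<forall>b\<in>A. c b + b \<bullet> x \<le> c a + a \<bullet> x)"
      unfolding targmax_def using ge by auto
  next
    assume a: "a \<in> A \<and> (\<forall>b\<in>A. c b + b \<bullet> x \<le> c a + a \<bullet> x)"
    then have "c a + a \<bullet> x = tval A c x" using b0 ge by (metis order_antisym)
    then show "a \<in> targmax A c x" unfolding targmax_def using a by simp
  qed
qed

lemma targmax_nonempty:
  assumes "finite A" "A \<noteq> {}"
  shows "targmax A c x \<noteq> {}"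
proof -
  have "tval A c x \<in> (\<lambda>a. c a + a \<bullet> x) ` A" unfolding tval_def using assms by (intro Max_in) auto
  then show ?thesis unfolding targmax_def by auto
qed

lemma targmax_same_value:
  "a \<in> targmax A c x \<Longrightarrow> b \<in> targmax A c x \<Longrightarrow> c a + a \<bullet> x = c b + b \<bullet> x"
  unfolding targmax_def by auto

lemma targmax_gap:
  assumes "finite A"
  obtains g where "g > 0" "\<And>a. a \<in> A \<Longrightarrow> a \<notin> targmax A c x \<Longrightarrow> c a + a \<bullet> x + g \<le> tval A c x"
proof -
  have less: "c a + a \<bullet> x < tval A c x" if "a \<in> A" "a \<notin> targmax A c x" for a
  proof -
    have "c a + a \<bullet> x \<le> tval A c x" unfolding tval_def using assms that(1) by (intro Max_ge) auto
    moreover have "c a + a \<bullet> x \<noteq> tval A c x" using that unfolding targmax_def by blast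
    ultimately show ?thesis by simp
  qed
  define g where "g = Min (insert 1 ((\<lambda>a. tval A c x - (c a + a \<bullet> x)) ` (A - targmax A c x)))"
  have "g > 0" unfolding g_def using assms less by (subst Min_gr_iff) auto
  moreover have "c a + a \<bullet> x + g \<le> tval A c x" if "a \<in> A" "a \<notin> targmax A c x" for a
  proof -
    have "g \<le> tval A c x - (c a + a \<bullet> x)" unfolding g_def using assms that by (intro Min_le) auto
    then show ?thesis by simp
  qed
  ultimately show ?thesis by (rule that)
qed

lemma exists_small_step:
  fixes f :: "'a \<Rightarrow> real"
  assumes "finite A" "g > 0"
  obtains \<epsilon> where "\<epsilon> > 0" "\<And>a. a \<in> A \<Longrightarrow> 2 * \<bar>\<epsilon> * f a\<bar> < g"
proof -
  define K where "K = (\<Sum>a\<in>A. \<bar>f a\<bar>)"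
  have K0: "K \<ge> 0" unfolding K_def by (simp add: sum_nonneg)
  define \<epsilon> where "\<epsilon> = g / (2 * K + 2)"
  have epos: "\<epsilon> > 0" unfolding \<epsilon>_def using assms(2) K0 by simp
  have "2 * \<bar>\<epsilon> * f a\<bar> < g" if "a \<in> A" for a
  proof -
    have "\<bar>f a\<bar> \<le> K" unfolding K_def using assms(1) that by (intro member_le_sum) auto
    then have "2 * \<bar>\<epsilon> * f a\<bar> \<le> \<epsilon> * (2 * K)" using epos by (simp add: abs_mult)
    also have "\<dots> < \<epsilon> * (2 * K + 2)" using epos by simp
    also have "\<dots> = g" unfolding \<epsilon>_def using K0 by simp
    finally show ?thesis .
  qed
  with epos show ?thesis by (rule that)
qed

text \<open>The step is chosen small against the gap between the maximum and the other values.\<close>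

lemma targmax_perturb:
  assumes A: "finite A" "A \<noteq> {}" and T: "targmax A c x = T"
  shows "\<exists>\<epsilon>>0. targmax A c (x + \<epsilon> *\<^sub>R w) = {a\<in>T. \<forall>b\<in>T. b \<bullet> w \<le> a \<bullet> w}"
proof -
  obtain g where g: "g > 0" "\<And>a. a \<in> A \<Longrightarrow> a \<notin> T \<Longrightarrow> c a + a \<bullet> x + g \<le> tval A c x"
    using targmax_gap[OF A(1)] T by metis
  obtain \<epsilon> where e: "\<epsilon> > 0" "\<And>a. a \<in> A \<Longrightarrow> 2 * \<bar>\<epsilon> * (a \<bullet> w)\<bar> < g"
    using exists_small_step[OF A(1) g(1), where f = "\<lambda>a. a \<bullet> w"] by blast
  define val where "val a = c a + a \<bullet> (x + \<epsilon> *\<^sub>R w)" for a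
  have val: "val a = c a + a \<bullet> x + \<epsilon> * (a \<bullet> w)" for a
    unfolding val_def by (simp add: inner_add_right)
  have TA: "T \<subseteq> A" and top: "\<And>a. a \<in> T \<Longrightarrow> c a + a \<bullet> x = tval A c x"
    using T unfolding targmax_def by auto
  obtain t0 where t0: "t0 \<in> T" using targmax_nonempty[OF A, of c x] T by auto
  have gap: "val b < val a" if "a \<in> T" "b \<in> A" "b \<notin> T" for a b
    using g(2)[OF that(2,3)] e(2)[OF that(2)] e(2)[of a] top[OF that(1)] TA that(1)
    by (auto simp: val abs_less_iff)
  have on_T: "val b \<le> val a \<longleftrightarrow> b \<bullet> w \<le> a \<bullet> w" if "a \<in> T" "b \<in> T" for a b
    using top[OF that(1)] top[OF that(2)] e(1) by (simp add: val)
  have "a \<in> targmax A c (x + \<epsilon> *\<^sub>R w) \<longleftrightarrow> a \<in> T \<and> (\<forall>b\<in>T. b \<bullet> w \<le> a \<bullet> w)" for a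
  proof
    assume "a \<in> targmax A c (x + \<epsilon> *\<^sub>R w)"
    then have a: "a \<in> A" "\<forall>b\<in>A. val b \<le> val a"
      using targmax_iff[OF A] unfolding val_def by blast+
    then have "a \<in> T" using gap[OF t0] t0 TA by (meson not_le subsetD)
    then show "a \<in> T \<and> (\<forall>b\<in>T. b \<bullet> w \<le> a \<bullet> w)" using a(2) on_T TA by blast
  next
    assume a: "a \<in> T \<and> (\<forall>b\<in>T. b \<bullet> w \<le> a \<bullet> w)"
    then have "\<forall>b\<in>A. val b \<le> val a" using gap on_T by (meson less_imp_le)
    then show "a \<in> targmax A c (x + \<epsilon> *\<^sub>R w)"
      using targmax_iff[OF A] a TA unfolding val_def by blast
  qed
  then have "targmax A c (x + \<epsilon> *\<^sub>R w) = {a\<in>T. \<forall>b\<in>T. b \<bullet> w \<le> a \<bullet> w}" by blast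
  with e(1) show ?thesis by blast
qed

definition level_space :: "(real^'n::finite) set \<Rightarrow> (real^'n) set" where
  "level_space T = {v. \<forall>a\<in>T. \<forall>b\<in>T. a \<bullet> v = b \<bullet> v}"

lemma level_spaceD: "v \<in> level_space T \<Longrightarrow> a \<in> T \<Longrightarrow> b \<in> T \<Longrightarrow> a \<bullet> v = b \<bullet> v"
  unfolding level_space_def by blast

lemma subspace_level_space: "subspace (level_space T)"
  unfolding subspace_def
proof (intro conjI ballI allI)
  fix x y assume xy: "x \<in> level_space T" "y \<in> level_space T"
  show "x + y \<in> level_space T" unfolding level_space_def
  proof (intro CollectI ballI)
    fix a b assume "a \<in> T" "b \<in> T"
    then have "a \<bullet> x = b \<bullet> x" "a \<bullet> y = b \<bullet> y" using xy unfolding level_space_def by blast+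
    then show "a \<bullet> (x + y) = b \<bullet> (x + y)" by (simp only: inner_add_right)
  qed
next
  fix r :: real and x assume x: "x \<in> level_space T"
  show "r *\<^sub>R x \<in> level_space T" unfolding level_space_def
  proof (intro CollectI ballI)
    fix a b assume "a \<in> T" "b \<in> T"
    then have "a \<bullet> x = b \<bullet> x" using x unfolding level_space_def by blast
    then show "a \<bullet> (r *\<^sub>R x) = b \<bullet> (r *\<^sub>R x)" by (simp only: inner_scaleR_right)
  qed
qed (simp add: level_space_def)

lemma tspace_face:
  assumes A: "finite A" "A \<noteq> {}" and T: "targmax A c x = T"
  shows "tspace {y. T \<subseteq> targmax A c y} = level_space T"
proof
  show "tspace {y. T \<subseteq> targmax A c y} \<subseteq> level_space T"
    unfolding tspace_def
  proof (rule span_minimal[OF _ subspace_level_space], rule subsetI)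
    fix z assume "z \<in> {x - y |x y. x \<in> {y. T \<subseteq> targmax A c y} \<and> y \<in> {y. T \<subseteq> targmax A c y}}"
    then obtain x y where z: "z = x - y" "T \<subseteq> targmax A c x" "T \<subseteq> targmax A c y" by blast
    have "a \<bullet> z = b \<bullet> z" if "a \<in> T" "b \<in> T" for a b
    proof -
      have "c a + a \<bullet> x = c b + b \<bullet> x" "c a + a \<bullet> y = c b + b \<bullet> y"
        using z(2,3) that by (meson subsetD targmax_same_value)+
      then show ?thesis unfolding z(1) by (simp add: inner_diff_right)
    qed
    then show "z \<in> level_space T" unfolding level_space_def by blast
  qed
  show "level_space T \<subseteq> tspace {y. T \<subseteq> targmax A c y}"
  proof
    fix v assume v: "v \<in> level_space T"
    obtain \<epsilon> where e: "\<epsilon> > 0" "targmax A c (x + \<epsilon> *\<^sub>R v) = {a\<in>T. \<forall>b\<in>T. b \<bullet> v \<le> a \<bullet> v}"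
      using targmax_perturb[OF A T] by blast
    have "{a\<in>T. \<forall>b\<in>T. b \<bullet> v \<le> a \<bullet> v} = T"
      using v unfolding level_space_def by (blast intro: eq_refl)
    then have "x + \<epsilon> *\<^sub>R v \<in> {y. T \<subseteq> targmax A c y}" "x \<in> {y. T \<subseteq> targmax A c y}"
      using e(2) T by auto
    then have "(x + \<epsilon> *\<^sub>R v) - x \<in> tspace {y. T \<subseteq> targmax A c y}"
      unfolding tspace_def by (intro span_base) blast
    then have "\<epsilon> *\<^sub>R v \<in> tspace {y. T \<subseteq> targmax A c y}" by simp
    then have "(1/\<epsilon>) *\<^sub>R (\<epsilon> *\<^sub>R v) \<in> tspace {y. T \<subseteq> targmax A c y}"
      unfolding tspace_def by (rule span_mul)
    then show "v \<in> tspace {y. T \<subseteq> targmax A c y}" using e(1) by simp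
  qed
qed

lemma tfacesE:
  assumes "\<tau> \<in> tfaces A c"
  obtains x where "\<tau> = {y. targmax A c x \<subseteq> targmax A c y}" "card (targmax A c x) \<ge> 2"
proof -
  obtain S x where "\<tau> = {y. S \<subseteq> targmax A c y}" "targmax A c x = S" "card S \<ge> 2"
    using assms unfolding tfaces_def by (auto simp only: mem_Collect_eq)
  then show ?thesis by (intro that[of x]) simp_all
qed

lemma tfacesI:
  "targmax A c x = S \<Longrightarrow> card S \<ge> 2 \<Longrightarrow> {y. S \<subseteq> targmax A c y} \<in> tfaces A c"
  unfolding tfaces_def by (intro CollectI exI[of _ S]) auto


section \<open>Counting and the rank polynomial\<close>

lemma card_subsets_containing:
  assumes "k \<le> m" "k \<le> p"
  shows "card {J. J \<subseteq> {..<m::nat} \<and> card J = p \<and> {..<k} \<subseteq> J} = (m - k) choose (p - k)"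
proof -
  let ?C = "{J. J \<subseteq> {..<m::nat} \<and> card J = p \<and> {..<k} \<subseteq> J}"
  let ?T = "{J'. J' \<subseteq> {k..<m} \<and> card J' = p - k}"
  have "bij_betw (\<lambda>J. J - {..<k}) ?C ?T"
  proof (rule bij_betw_byWitness[where f' = "\<lambda>J'. J' \<union> {..<k}"])
    show "\<forall>J\<in>?C. J - {..<k} \<union> {..<k} = J" by auto
    show "\<forall>J'\<in>?T. J' \<union> {..<k} - {..<k} = J'" by auto
    show "(\<lambda>J. J - {..<k}) ` ?C \<subseteq> ?T"
    proof
      fix J' assume "J' \<in> (\<lambda>J. J - {..<k}) ` ?C"
      then obtain J where J: "J \<subseteq> {..<m}" "card J = p" "{..<k} \<subseteq> J" "J' = J - {..<k}" by auto
      have "finite J" using J(1) finite_subset by blast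
      then have "card J' = p - k" using J by (simp add: card_Diff_subset)
      moreover have "J' \<subseteq> {k..<m}" using J by auto
      ultimately show "J' \<in> ?T" by simp
    qed
    show "(\<lambda>J'. J' \<union> {..<k}) ` ?T \<subseteq> ?C"
    proof
      fix J assume "J \<in> (\<lambda>J'. J' \<union> {..<k}) ` ?T"
      then obtain J' where J': "J' \<subseteq> {k..<m}" "card J' = p - k" "J = J' \<union> {..<k}" by auto
      have "finite J'" using J'(1) finite_subset by blast
      moreover have "J' \<inter> {..<k} = {}" using J'(1) by auto
      ultimately have "card J = p - k + k" using J' by (simp add: card_Un_disjoint)
      then have "card J = p" using assms by simp
      moreover have "J \<subseteq> {..<m}" using J' assms by auto
      ultimately show "J \<in> ?C" using J' by auto
    qed
  qed
  then have "card ?C = card ?T" by (rule bij_betw_same_card)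
  also have "\<dots> = (m - k) choose (p - k)" using n_subsets[of "{k..<m}" "p - k"] by simp
  finally show ?thesis .
qed

lemma card_subsets_missing:
  assumes "k \<le> m"
  shows "card (subsets_missing m k p) + (if k \<le> p then (m - k) choose (p - k) else 0) = m choose p"
proof -
  let ?All = "{J. J \<subseteq> {..<m::nat} \<and> card J = p}"
  let ?G = "subsets_missing m k p"
  let ?C = "{J. J \<subseteq> {..<m::nat} \<and> card J = p \<and> {..<k} \<subseteq> J}"
  have fin: "finite ?All" by (rule finite_subset[of _ "Pow {..<m}"]) auto
  have "?All = ?G \<union> ?C" "?G \<inter> ?C = {}" unfolding subsets_missing_def by auto
  then have "card ?All = card ?G + card ?C"
    using fin by (metis (no_types, lifting) card_Un_disjoint finite_Un)
  moreover have "card ?All = m choose p" using n_subsets[of "{..<m}" p] by simp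
  moreover have "card ?C = (if k \<le> p then (m - k) choose (p - k) else 0)"
  proof (cases "k \<le> p")
    case True then show ?thesis using card_subsets_containing[OF assms True] by simp
  next
    case False
    have "?C = {}"
    proof (rule ccontr)
      assume "?C \<noteq> {}"
      then obtain J where J: "J \<subseteq> {..<m}" "card J = p" "{..<k} \<subseteq> J" by auto
      have "finite J" using J(1) finite_subset by blast
      then have "card {..<k} \<le> card J" using J(3) by (rule card_mono)
      then show False using J(2) False by simp
    qed
    then show ?thesis using False by simp
  qed
  ultimately show ?thesis by simp
qed

lemma one_minus_power_eq_sum:
  fixes t :: real
  assumes "m \<le> N"
  shows "(1 - t) ^ m = (\<Sum>p=0..N. real (m choose p) * (-t) ^ p)"
proof -
  have "(1 - t) ^ m = (-t + 1) ^ m" by simp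
  also have "\<dots> = (\<Sum>p\<le>m. real (m choose p) * (-t) ^ p * 1 ^ (m - p))"
    by (rule binomial_ring)
  also have "\<dots> = (\<Sum>p=0..m. real (m choose p) * (-t) ^ p)"
    by (simp add: atLeast0AtMost)
  also have "\<dots> = (\<Sum>p=0..N. real (m choose p) * (-t) ^ p)"
    by (rule sum.mono_neutral_left) (use assms in auto)
  finally show ?thesis .
qed

lemma one_minus_power_shift_eq_sum:
  fixes t :: real
  assumes "q + k \<le> N"
  shows "(1 - t) ^ q * (-t) ^ k = (\<Sum>p=0..N. (if k \<le> p then real (q choose (p - k)) else 0) * (-t) ^ p)"
proof -
  have "(1 - t) ^ q = (\<Sum>j=0..N-k. real (q choose j) * (-t) ^ j)"
    using assms by (intro one_minus_power_eq_sum) simp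
  then have "(1 - t) ^ q * (-t) ^ k = (\<Sum>j=0..N-k. real (q choose j) * (-t) ^ (j + k))"
    by (simp only: sum_distrib_right) (simp add: power_add mult.assoc)
  also have "\<dots> = (\<Sum>j=0..N-k. real (q choose (j + k - k)) * (-t) ^ (j + k))"
    by simp
  also have "\<dots> = (\<Sum>p=0+k..N-k+k. real (q choose (p - k)) * (-t) ^ p)"
    by (rule sum.shift_bounds_cl_nat_ivl[symmetric])
  also have "\<dots> = (\<Sum>p=0..N. (if k \<le> p then real (q choose (p - k)) else 0) * (-t) ^ p)"
    by (rule sum.mono_neutral_cong_left) (use assms in auto)
  finally show ?thesis .
qed

text \<open>Both sides have degree at most n + 1, and the coefficients of degree n + 1 cancel.\<close>

lemma signed_rank_polynomial:
  fixes t :: real and R :: "nat \<Rightarrow> real"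
  assumes mqk: "m = q + k" and mn: "m \<le> n + 1"
    and R: "\<And>p. R p = real (m choose p) - (if k \<le> p then real (q choose (p - k)) else 0)"
  shows "(\<Sum>p=0..n. (-1)^p * R p * t^p) = (1 - t)^m - (1 - t)^q * (-t)^(m - q)"
proof -
  have "(1 - t)^m - (1 - t)^q * (-t)^(m - q)
      = (\<Sum>p=0..n+1. real (m choose p) * (-t) ^ p)
        - (\<Sum>p=0..n+1. (if k \<le> p then real (q choose (p - k)) else 0) * (-t) ^ p)"
    using one_minus_power_eq_sum[OF mn, of t] one_minus_power_shift_eq_sum[of q k "n+1" t] mqk mn by simp
  also have "\<dots> = (\<Sum>p=0..n+1. R p * (-t) ^ p)"
    by (simp add: R sum_subtractf left_diff_distrib)
  also have "\<dots> = (\<Sum>p=0..n. R p * (-t) ^ p) + R (n+1) * (-t)^(n+1)"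
    by simp
  also have "R (n+1) = 0"
  proof (cases "m = n + 1")
    case True
    then have "n + 1 - k = q" using mqk by simp
    then show ?thesis using R True mqk by simp
  next
    case False
    then show ?thesis using R mqk mn by (simp add: binomial_eq_0)
  qed
  also have "(\<Sum>p=0..n. R p * (-t) ^ p) = (\<Sum>p=0..n. (-1)^p * R p * t^p)"
  proof (rule sum.cong[OF refl])
    fix p
    have "R p * (-t) ^ p = R p * ((-1) ^ p * t ^ p)" using power_minus[of t p] by (simp only:)
    then show "R p * (-t) ^ p = (-1)^p * R p * t^p" by (simp only: mult.assoc mult.left_commute)
  qed
  finally show ?thesis by simp
qed


section \<open>The primitive simplex dual to a face\<close>

locale unimodular_cell =
  fixes \<rho> :: "(real^'n::finite) set" and A :: "(real^'n) set" and c :: "real^'n \<Rightarrow> real"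
    and x0 a0 :: "real^'n" and bl :: "nat \<Rightarrow> real^'n" and m k :: nat
  assumes finite_A: "finite A" and A_nonempty: "A \<noteq> {}"
    and targmax_x0: "targmax A c x0 = insert a0 ((\<lambda>i. a0 + bl i) ` {..<k})"
    and k_le_m: "k \<le> m"
    and inj_bl: "inj_on bl {..<m}"
    and independent_bl: "independent (bl ` {..<m})"
    and bl_Mlat: "\<And>i. i < m \<Longrightarrow> bl i \<in> Mlat \<rho>"
    and Mlat_span: "Mlat \<rho> \<subseteq> span (bl ` {..<m})"
begin

abbreviation cell_face :: "(real^'n) set" where
  "cell_face \<equiv> {y. targmax A c x0 \<subseteq> targmax A c y}"

lemma bl_nonzero: "i < m \<Longrightarrow> bl i \<noteq> 0"
  using independent_bl dependent_zero[of "bl ` {..<m}"] by force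

lemma bl_ivecs: "i < m \<Longrightarrow> bl i \<in> ivecs"
  using bl_Mlat Mlat_subset_ivecs by blast

lemma cell_edge:
  assumes "a \<in> targmax A c x0" "b \<in> targmax A c x0" "a \<noteq> b"
  shows "(\<exists>i<k. a - b = bl i \<or> b - a = bl i) \<or> (\<exists>i<k. \<exists>j<k. i \<noteq> j \<and> a - b = bl i - bl j)"
proof (cases "a = a0 \<or> b = a0")
  case True
  then show ?thesis using assms unfolding targmax_x0 by auto
next
  case False
  then obtain i j where "i < k" "j < k" "a = a0 + bl i" "b = a0 + bl j"
    using assms(1,2) unfolding targmax_x0 by blast
  then show ?thesis using assms(3) by auto
qed

lemma face_orthogonal_edge:
  assumes "\<tau> \<in> tfaces A c" "cell_face \<subseteq> \<tau>"
  shows "(\<exists>i<k. \<forall>v\<in>tspace \<tau>. bl i \<bullet> v = 0)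
    \<or> (\<exists>i<k. \<exists>j<k. i \<noteq> j \<and> (\<forall>v\<in>tspace \<tau>. bl i \<bullet> v = bl j \<bullet> v))"
proof -
  obtain x where \<tau>: "\<tau> = {y. targmax A c x \<subseteq> targmax A c y}" "card (targmax A c x) \<ge> 2"
    by (rule tfacesE[OF assms(1)])
  define S where "S = targmax A c x"
  have "x0 \<in> \<tau>" using assms(2) by blast
  then have S_cell: "S \<subseteq> targmax A c x0" using \<tau>(1) unfolding S_def by blast
  obtain a b where ab: "a \<in> S" "b \<in> S" "a \<noteq> b"
    using obtain_subset_with_card_n[OF \<tau>(2)] card_2_iff unfolding S_def by (metis insert_subset)
  have tspace_\<tau>: "tspace \<tau> = level_space S"
    unfolding \<tau>(1) S_def by (rule tspace_face[OF finite_A A_nonempty refl])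
  have level: "(a - b) \<bullet> v = 0" "(b - a) \<bullet> v = 0" if "v \<in> tspace \<tau>" for v
  proof -
    have "a \<bullet> v = b \<bullet> v" using level_spaceD[of v S a b] that ab unfolding tspace_\<tau> by blast
    then show "(a - b) \<bullet> v = 0" "(b - a) \<bullet> v = 0" by (simp_all add: inner_diff_left)
  qed
  from cell_edge[OF subsetD[OF S_cell ab(1)] subsetD[OF S_cell ab(2)] ab(3)] show ?thesis
  proof
    assume "\<exists>i<k. a - b = bl i \<or> b - a = bl i"
    then show ?thesis using level by metis
  next
    assume "\<exists>i<k. \<exists>j<k. i \<noteq> j \<and> a - b = bl i - bl j"
    then obtain i j where ij: "i < k" "j < k" "i \<noteq> j" "a - b = bl i - bl j" by blast
    then have "\<forall>v\<in>tspace \<tau>. bl i \<bullet> v = bl j \<bullet> v" using level(1) by (simp add: inner_diff_left)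
    then show ?thesis using ij by blast
  qed
qed

lemma edge_functional:
  assumes "i < k"
  obtains w where "\<And>j. j < k \<Longrightarrow> bl j \<bullet> w = (if j = i then 0 else -1)"
proof -
  obtain u d where ud: "d \<noteq> 0" "\<And>i j. i < m \<Longrightarrow> j < m \<Longrightarrow> bl i \<bullet> u j = (if i = j then d else 0)"
    using exists_int_dual_vectors[OF bl_ivecs independent_bl inj_bl] by metis
  define w where "w = - ((1 / d) *\<^sub>R (\<Sum>j\<in>{..<k} - {i}. u j))"
  have "bl j \<bullet> w = (if j = i then 0 else -1)" if j: "j < k" for j
  proof -
    have "(\<Sum>j'\<in>{..<k} - {i}. bl j \<bullet> u j') = (\<Sum>j'\<in>{..<k} - {i}. if j = j' then d else 0)"
      using ud(2) j k_le_m by (intro sum.cong refl) auto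
    then show ?thesis using j ud(1) unfolding w_def by (simp add: inner_sum_right)
  qed
  then show ?thesis by (rule that)
qed

lemma edge_direction:
  assumes i: "i < k"
  obtains w where "{a\<in>targmax A c x0. \<forall>b\<in>targmax A c x0. b \<bullet> w \<le> a \<bullet> w} = {a0, a0 + bl i}"
proof -
  obtain w where blw: "\<And>j. j < k \<Longrightarrow> bl j \<bullet> w = (if j = i then 0 else -1)"
    using edge_functional[OF i] by blast
  have vertex: "(a0 + bl j) \<bullet> w = a0 \<bullet> w - (if j = i then 0 else 1)" if "j < k" for j
    using blw[OF that] by (simp add: inner_add_left)
  have le: "b \<bullet> w \<le> a0 \<bullet> w" if "b \<in> targmax A c x0" for b
  proof -
    from that consider "b = a0" | j where "j < k" "b = a0 + bl j" unfolding targmax_x0 by blast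
    then show ?thesis using vertex by cases auto
  qed
  have "{a\<in>targmax A c x0. \<forall>b\<in>targmax A c x0. b \<bullet> w \<le> a \<bullet> w}
      = {a\<in>targmax A c x0. a \<bullet> w = a0 \<bullet> w}"
  proof (intro Collect_cong conj_cong refl)
    fix a assume a: "a \<in> targmax A c x0"
    have a0: "a0 \<in> targmax A c x0" unfolding targmax_x0 by simp
    show "(\<forall>b\<in>targmax A c x0. b \<bullet> w \<le> a \<bullet> w) \<longleftrightarrow> a \<bullet> w = a0 \<bullet> w"
    proof
      assume "\<forall>b\<in>targmax A c x0. b \<bullet> w \<le> a \<bullet> w"
      then have "a0 \<bullet> w \<le> a \<bullet> w" using a0 by blast
      then show "a \<bullet> w = a0 \<bullet> w" using le[OF a] by simp
    qed (use le in simp)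
  qed
  also have "\<dots> = {a0, a0 + bl i}"
  proof (intro equalityI subsetI)
    fix a assume "a \<in> {a\<in>targmax A c x0. a \<bullet> w = a0 \<bullet> w}"
    then consider "a = a0" | j where "j < k" "a = a0 + bl j" "(a0 + bl j) \<bullet> w = a0 \<bullet> w"
      unfolding targmax_x0 by blast
    then show "a \<in> {a0, a0 + bl i}" using vertex by cases (auto split: if_splits)
  next
    fix a assume "a \<in> {a0, a0 + bl i}"
    then show "a \<in> {a\<in>targmax A c x0. a \<bullet> w = a0 \<bullet> w}" using i vertex[OF i] targmax_x0 by auto
  qed
  finally have "{a\<in>targmax A c x0. \<forall>b\<in>targmax A c x0. b \<bullet> w \<le> a \<bullet> w} = {a0, a0 + bl i}" .
  then show ?thesis by (rule that)
qed

lemma edge_face: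
  assumes i: "i < k"
  shows "\<exists>\<tau>\<in>{\<tau> \<in> tfaces A c. cell_face \<subseteq> \<tau>}. \<forall>v. bl i \<bullet> v = 0 \<longrightarrow> v \<in> tspace \<tau>"
proof -
  define P where "P = {a0, a0 + bl i}"
  obtain w where "{a\<in>targmax A c x0. \<forall>b\<in>targmax A c x0. b \<bullet> w \<le> a \<bullet> w} = P"
    using edge_direction[OF i] unfolding P_def by blast
  then obtain \<epsilon> where P: "targmax A c (x0 + \<epsilon> *\<^sub>R w) = P"
    using targmax_perturb[OF finite_A A_nonempty refl, of c x0 w] by auto
  have "card P = 2" using bl_nonzero i k_le_m unfolding P_def by auto
  then have "{y. P \<subseteq> targmax A c y} \<in> tfaces A c" using tfacesI[OF P] by simp
  moreover have "P \<subseteq> targmax A c x0" using targmax_x0 i unfolding P_def by auto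
  then have "cell_face \<subseteq> {y. P \<subseteq> targmax A c y}" by blast
  moreover have "v \<in> level_space P" if "bl i \<bullet> v = 0" for v
    using that unfolding level_space_def P_def by (auto simp: inner_add_left)
  then have "v \<in> tspace {y. P \<subseteq> targmax A c y}" if "bl i \<bullet> v = 0" for v
    using that tspace_face[OF finite_A A_nonempty P] by blast
  ultimately show ?thesis by blast
qed

lemma tspace_cell_face: "tspace cell_face = {v. \<forall>i<k. bl i \<bullet> v = 0}"
proof -
  have "v \<in> level_space (targmax A c x0) \<longleftrightarrow> (\<forall>i<k. bl i \<bullet> v = 0)" for v
  proof
    assume v: "v \<in> level_space (targmax A c x0)"
    have "bl i \<bullet> v = 0" if "i < k" for i
    proof -
      have "a0 + bl i \<in> targmax A c x0" "a0 \<in> targmax A c x0"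
        unfolding targmax_x0 using that by auto
      from level_spaceD[OF v this] show ?thesis by (simp add: inner_add_left)
    qed
    then show "\<forall>i<k. bl i \<bullet> v = 0" by blast
  next
    assume h: "\<forall>i<k. bl i \<bullet> v = 0"
    have vertex: "a \<bullet> v = a0 \<bullet> v" if "a \<in> targmax A c x0" for a
    proof -
      from that consider "a = a0" | i where "i < k" "a = a0 + bl i" unfolding targmax_x0 by blast
      then show ?thesis using h by cases (simp_all add: inner_add_left)
    qed
    show "v \<in> level_space (targmax A c x0)" unfolding level_space_def
    proof (intro CollectI ballI)
      fix a b assume "a \<in> targmax A c x0" "b \<in> targmax A c x0"
      then show "a \<bullet> v = b \<bullet> v" using vertex[of a] vertex[of b] by simp
    qed
  qed
  then show ?thesis using tspace_face[OF finite_A A_nonempty refl] by blast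
qed

lemma dim_tspace_cell_face: "dim (tspace cell_face) = CARD('n) - k"
proof -
  have "independent (bl ` {..<k})"
    using independent_mono[OF independent_bl] k_le_m by (simp add: image_mono)
  moreover have "inj_on bl {..<k}" using inj_on_subset[OF inj_bl] k_le_m by simp
  ultimately show ?thesis unfolding tspace_cell_face by (rule dim_orthogonal_independent)
qed

theorem zrank_Fp_cell_face: "zrank (Fp \<rho> A c p cell_face) = card (subsets_missing m k p)"
proof -
  obtain u d where ud: "d \<noteq> 0" "\<And>j. j < m \<Longrightarrow> u j \<in> ivecs"
    "\<And>i j. i < m \<Longrightarrow> j < m \<Longrightarrow> bl i \<bullet> u j = (if i = j then d else 0)"
    using exists_int_dual_vectors[OF bl_ivecs independent_bl inj_bl] by metis
  interpret dual_simplex_faces \<rho> bl m k "{\<tau> \<in> tfaces A c. cell_face \<subseteq> \<tau>}" u d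
    by unfold_locales
      (simp_all add: bl_Mlat inj_bl Mlat_span k_le_m face_orthogonal_edge edge_face[simplified] ud)
  have "Fp \<rho> A c p cell_face = zspan (face_wedges p)"
    unfolding Fp_def face_wedges_def by (simp add: conj_assoc)
  then show ?thesis using zrank_zspan_face_wedges by simp
qed

end

lemma dim_Mlat_cone:
  fixes \<rho> :: "(real^'n::finite) set"
  assumes "smooth_fan Fan" "\<rho> \<in> Fan"
  shows "CARD('n) - card \<rho> \<le> dim (Mlat \<rho>)"
proof -
  have "\<forall>\<rho>\<in>Fan. finite \<rho> \<and> (\<exists>C. lattice_basis ivecs C CARD('n) \<and> \<rho> \<subseteq> C)"
    using assms(1) unfolding smooth_fan_def by (elim conjE) assumption
  then obtain C where "lattice_basis ivecs C CARD('n)" "\<rho> \<subseteq> C" using assms(2) by blast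
  then show ?thesis by (rule dim_Mlat_ge)
qed

lemma translate_image_eq:
  fixes a0 :: "'a::ab_group_add"
  assumes "a0 \<in> S" "f ` I = (\<lambda>a. a - a0) ` (S - {a0})"
  shows "S = insert a0 ((\<lambda>i. a0 + f i) ` I)"
proof -
  have "(\<lambda>i. a0 + f i) ` I = (\<lambda>e. a0 + e) ` f ` I" by (simp add: image_image)
  also have "\<dots> = S - {a0}" unfolding assms(2) image_image by simp
  finally show ?thesis using assms(1) by blast
qed

lemma tface_unimodular_cell:
  fixes \<rho> :: "(real^'n::finite) set"
  assumes fan: "smooth_fan Fan" "\<rho> \<in> Fan" and A: "trop_poly \<rho> A" and tri: "prim_tri \<rho> A c"
    and \<sigma>: "\<sigma> \<in> tfaces A c"
  obtains x0 a0 bl k where "unimodular_cell \<rho> A c x0 a0 bl (CARD('n) - card \<rho>) k"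
    and "\<sigma> = {y. targmax A c x0 \<subseteq> targmax A c y}"
proof -
  define m where "m = CARD('n) - card \<rho>"
  obtain x0 where \<sigma>0: "\<sigma> = {y. targmax A c x0 \<subseteq> targmax A c y}"
    using tfacesE[OF \<sigma>] by blast
  define S where "S = targmax A c x0"
  have "\<exists>a0\<in>targmax A c x0. card ((\<lambda>a. a - a0) ` (targmax A c x0 - {a0})) = card (targmax A c x0) - 1
     \<and> (\<exists>B. lattice_basis (Mlat \<rho>) B (CARD('n) - card \<rho>) \<and> (\<lambda>a. a - a0) ` (targmax A c x0 - {a0}) \<subseteq> B)"
    using tri unfolding prim_tri_def by (rule spec)
  then obtain a0 B where a0: "a0 \<in> S" and B: "lattice_basis (Mlat \<rho>) B m"
    and EB: "(\<lambda>a. a - a0) ` (S - {a0}) \<subseteq> B"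
    unfolding S_def[symmetric] m_def by (elim bexE exE conjE) blast
  define E where "E = (\<lambda>a. a - a0) ` (S - {a0})"
  have Bf: "finite B" "card B = m" "int_span B = Mlat \<rho>" "B \<subseteq> Mlat \<rho>"
    using B unfolding lattice_basis_def by auto
  obtain bl where bl: "inj_on bl {..<m}" "bl ` {..<card E} = E" "bl ` {..<m} = B"
    by (rule obtain_enumeration_prefix[OF Bf(1) EB[folded E_def], unfolded Bf(2)])
  have "bl ` {..<card E} = (\<lambda>a. a - a0) ` (S - {a0})" using bl(2) unfolding E_def .
  note cell = translate_image_eq[OF a0 this]
  have "independent B"
    using lattice_basis_Mlat_independent[OF B] dim_Mlat_cone[OF fan] unfolding m_def by blast
  have "unimodular_cell \<rho> A c x0 a0 bl m (card E)"
  proof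
    show "finite A" "A \<noteq> {}" using A unfolding trop_poly_def by simp_all
    show "targmax A c x0 = insert a0 ((\<lambda>i. a0 + bl i) ` {..<card E})"
      by (simp only: S_def[symmetric] cell)
    show "card E \<le> m" using card_mono[OF Bf(1) EB[folded E_def]] Bf(2) by simp
    show "inj_on bl {..<m}" by (rule bl(1))
    show "independent (bl ` {..<m})" using \<open>independent B\<close> bl(3) by simp
    show "bl i \<in> Mlat \<rho>" if "i < m" for i using bl(3) Bf(4) that by blast
    show "Mlat \<rho> \<subseteq> span (bl ` {..<m})" using Bf(3) int_span_subset_span[of B] bl(3) by simp
  qed
  from this \<sigma>0 show ?thesis unfolding m_def by (rule that)
qed

theorem corollary2p15:
  fixes Fan :: "(real^'n::finite) set set"
    and A0 A \<rho> \<sigma> :: "(real^'n) set"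
    and c0 c :: "real^'n \<Rightarrow> real"
    and n q m :: nat
  assumes "CARD('n) = n + 1"
    and "smooth_fan Fan"
    and "trop_poly {} A0"
    and "nonsingular Fan (tvar A0 c0)"
    and "\<rho> \<in> Fan"
    and "trop_poly \<rho> A" and "prim_tri \<rho> A c"
    and "clos_stratum \<rho> (tvar A0 c0) = tvar A c"
    and "\<sigma> \<in> tfaces A c"
    and "q = dim (tspace \<sigma>) - card \<rho>"
    and "m = CARD('n) - card \<rho>"
  shows "\<forall>t::real. (\<Sum>p=0..n. (-1)^p * real (zrank (Fp \<rho> A c p \<sigma>)) * t^p)
                   = (1 - t)^m - (1 - t)^q * (-t)^(m - q)"
proof
  fix t :: real
  obtain x0 a0 bl k where cell: "unimodular_cell \<rho> A c x0 a0 bl m k"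
    and \<sigma>: "\<sigma> = {y. targmax A c x0 \<subseteq> targmax A c y}"
    by (rule tface_unimodular_cell[OF assms(2,5,6,7,9), folded assms(11)])
  interpret unimodular_cell \<rho> A c x0 a0 bl m k by (rule cell)
  have q: "q = m - k" using assms(10,11) dim_tspace_cell_face unfolding \<sigma> by simp
  have "real (zrank (Fp \<rho> A c p \<sigma>)) = real (m choose p) - (if k \<le> p then real (q choose (p - k)) else 0)"
    for p
    using card_subsets_missing[OF k_le_m, of p] zrank_Fp_cell_face[of p] q unfolding \<sigma>
    by (simp split: if_splits)
  moreover have "m = q + k" "m \<le> n + 1" using q k_le_m assms(1,11) by auto
  ultimately show "(\<Sum>p=0..n. (-1)^p * real (zrank (Fp \<rho> A c p \<sigma>)) * t^p)
      = (1 - t)^m - (1 - t)^q * (-t)^(m - q)"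
    by (intro signed_rank_polynomial)
qed

end
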